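(* For each $i\in\{0,\dots,\tau-1\}$, the total complexity (total number of break points) of all lower envelopes $L_1,\dots,L_m$ restricted to $[t_i,t_{i+1}]$ is $O(n^2)$.
   Context: Entities of a set $\mathcal{X}$ of size $n$ move in $\mathbb{R}^1$ along piecewise-linear trajectories with vertices at common times $t_0<\dots<t_\tau$; $\varepsilon>0$ is fixed; trajectories are in general position (no three meet at one point at the same time, no two pairs are at distance exactly $\varepsilon$ at the same time). $\mathcal{I}(t)=(\max_\sigma\sigma(t)+\min_\sigma\sigma(t))/2$. Two entities are $\varepsilon$-connected at time $t$ if they are joined by a chain of entities with consecutive distances at most $\varepsilon$ at time $t$. At each time, $\mathcal{X}$ is partitioned into $\varepsilon$-connectivity classes; let $(\mathcal{X}_1,J_1),\dots,(\mathcal{X}_m,J_m)$ be all pairs where $J_j$ is a maximal time interval during which $\mathcal{X}_j$ is one of these classes at every time. Let $f_\sigma(t)=|\sigma(t)-\mathcal{I}(t)|$ and $L_j$ the lower envelope of $\{f_\sigma:\sigma\in\mathcal{X}_j\}$ restricted to $J_j$. A break point of $L_j$ is a triple $(t,\sigma,\psi)$, $\sigma\neq\psi\in\mathcal{X}_j$, $t\in J_j$, with $L_j(t)=f_\sigma(t)=f_\psi(t)$. *)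

theory Defs
  imports Complex_Main
begin

definition entities :: "nat \<Rightarrow> nat set" where
  "entities n = {..<n}"

definition time_vertices_ok :: "(nat \<Rightarrow> real) \<Rightarrow> nat \<Rightarrow> bool" where
  "time_vertices_ok tv tau \<longleftrightarrow> (\<forall>k<tau. tv k < tv (Suc k))"

definition piecewise_linear_traj ::
  "nat \<Rightarrow> (nat \<Rightarrow> real \<Rightarrow> real) \<Rightarrow> (nat \<Rightarrow> real) \<Rightarrow> nat \<Rightarrow> bool" where
  "piecewise_linear_traj n traj tv tau \<longleftrightarrow>
     (\<forall>s\<in>entities n. \<forall>k<tau. \<exists>a b. \<forall>x\<in>{tv k..tv (Suc k)}. traj s x = a * x + b)"

definition general_position ::
  "nat \<Rightarrow> (nat \<Rightarrow> real \<Rightarrow> real) \<Rightarrow> (nat \<Rightarrow> real) \<Rightarrow> nat \<Rightarrow> real \<Rightarrow> bool" where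
  "general_position n traj tv tau eps \<longleftrightarrow>
     (\<forall>x\<in>{tv 0..tv tau}.
        (\<forall>a\<in>entities n. \<forall>b\<in>entities n. \<forall>c\<in>entities n.
           a \<noteq> b \<and> b \<noteq> c \<and> a \<noteq> c \<longrightarrow> \<not> (traj a x = traj b x \<and> traj b x = traj c x)) \<and>
        (\<forall>a\<in>entities n. \<forall>b\<in>entities n. \<forall>c\<in>entities n. \<forall>d\<in>entities n.
           a \<noteq> b \<and> c \<noteq> d \<and> {a, b} \<noteq> {c, d} \<longrightarrow>
           \<not> (\<bar>traj a x - traj b x\<bar> = eps \<and> \<bar>traj c x - traj d x\<bar> = eps)))"

definition centre :: "nat \<Rightarrow> (nat \<Rightarrow> real \<Rightarrow> real) \<Rightarrow> real \<Rightarrow> real" where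
  "centre n traj x = (Max ((\<lambda>s. traj s x) ` entities n) + Min ((\<lambda>s. traj s x) ` entities n)) / 2"

definition eps_connected ::
  "nat \<Rightarrow> (nat \<Rightarrow> real \<Rightarrow> real) \<Rightarrow> real \<Rightarrow> real \<Rightarrow> nat \<Rightarrow> nat \<Rightarrow> bool" where
  "eps_connected n traj eps x a b \<longleftrightarrow>
     a \<in> entities n \<and> b \<in> entities n \<and>
     (a, b) \<in> {(p, q). p \<in> entities n \<and> q \<in> entities n \<and> \<bar>traj p x - traj q x\<bar> \<le> eps}\<^sup>*"

definition conn_classes ::
  "nat \<Rightarrow> (nat \<Rightarrow> real \<Rightarrow> real) \<Rightarrow> real \<Rightarrow> real \<Rightarrow> nat set set" where
  "conn_classes n traj eps x = {{b. eps_connected n traj eps x a b} | a. a \<in> entities n}"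

definition is_real_interval :: "real set \<Rightarrow> bool" where
  "is_real_interval J \<longleftrightarrow> (\<forall>a\<in>J. \<forall>b\<in>J. {a..b} \<subseteq> J)"

definition component_pair ::
  "nat \<Rightarrow> (nat \<Rightarrow> real \<Rightarrow> real) \<Rightarrow> (nat \<Rightarrow> real) \<Rightarrow> nat \<Rightarrow> real \<Rightarrow> nat set \<Rightarrow> real set \<Rightarrow> bool" where
  "component_pair n traj tv tau eps A J \<longleftrightarrow>
     J \<noteq> {} \<and> is_real_interval J \<and> J \<subseteq> {tv 0..tv tau} \<and>
     (\<forall>x\<in>J. A \<in> conn_classes n traj eps x) \<and>
     (\<forall>J'. J \<subseteq> J' \<and> is_real_interval J' \<and> J' \<subseteq> {tv 0..tv tau} \<and>
           (\<forall>x\<in>J'. A \<in> conn_classes n traj eps x) \<longrightarrow> J' = J)"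

definition fdist :: "nat \<Rightarrow> (nat \<Rightarrow> real \<Rightarrow> real) \<Rightarrow> nat \<Rightarrow> real \<Rightarrow> real" where
  "fdist n traj s x = \<bar>traj s x - centre n traj x\<bar>"

definition lower_env :: "nat \<Rightarrow> (nat \<Rightarrow> real \<Rightarrow> real) \<Rightarrow> nat set \<Rightarrow> real \<Rightarrow> real" where
  "lower_env n traj A x = Min ((\<lambda>s. fdist n traj s x) ` A)"

definition break_points ::
  "nat \<Rightarrow> (nat \<Rightarrow> real \<Rightarrow> real) \<Rightarrow> nat set \<Rightarrow> real set \<Rightarrow> (real \<times> nat \<times> nat) set" where
  "break_points n traj A J =
     {(x, s, p). x \<in> J \<and> s \<in> A \<and> p \<in> A \<and> s \<noteq> p \<and>
        lower_env n traj A x = fdist n traj s x \<and> fdist n traj s x = fdist n traj p x}"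

text \<open>All break points of all lower envelopes L_1..L_m restricted to [tv i, tv (i+1)],
  each tagged with the pair (X_j, J_j) it belongs to (so the cardinality is the total count).\<close>
definition segment_break_points ::
  "nat \<Rightarrow> (nat \<Rightarrow> real \<Rightarrow> real) \<Rightarrow> (nat \<Rightarrow> real) \<Rightarrow> nat \<Rightarrow> real \<Rightarrow> nat
     \<Rightarrow> ((nat set \<times> real set) \<times> (real \<times> nat \<times> nat)) set" where
  "segment_break_points n traj tv tau eps i =
     {((A, J), (x, s, p)). component_pair n traj tv tau eps A J \<and>
        (x, s, p) \<in> break_points n traj A J \<and> x \<in> {tv i..tv (Suc i)}}"

end

theory Submission
  imports Defs
begin

text \<open>On one time segment every trajectory is a line. A break point at an end of the segment is
  determined up to 4 choices by one of its entities, since at most two lines pass through a point,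
  and a break point at which two distinct lines cross is determined by the pair. At any other break
  point the two entities are either the same line (twins) or lie symmetrically around the centre
  with no entity strictly between them, as the connectivity class would otherwise absorb that
  entity. Between two consecutive times carrying such a gap break point something happens: two
  lines cross, a pair reaches distance exactly eps, the upper or lower envelope bends, or an entity
  crosses the centre; otherwise the same break point fills the whole interval, contradicting
  finiteness. This bounds the gap times by O(n^2). A twin break point has a partner break point
  with a different line, since otherwise it would persist on the side where the links are stable,
  and this maps the twins injectively into the other two kinds.\<close>

section \<open>Affine functions and one-sided limits\<close>

lemma affine_zero_between:
  fixes K M x y :: real
  assumes "x \<le> y" "(K * x + M) * (K * y + M) \<le> 0"
  shows "\<exists>t\<in>{x..y}. K * t + M = 0"
proof -
  have cont: "continuous_on {x..y} (\<lambda>t. K * t + M)"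
    by (intro continuous_intros)
  have "K * x + M \<le> 0 \<and> 0 \<le> K * y + M \<or> K * y + M \<le> 0 \<and> 0 \<le> K * x + M"
    using assms(2) by (auto simp: mult_le_0_iff)
  then show ?thesis
    using IVT'[OF _ _ assms(1) cont] IVT2'[OF _ _ assms(1) cont] by fastforce
qed

lemma affine_sign_stable:
  fixes K M x y :: real
  assumes "x \<le> y" "\<And>t. t \<in> {x..y} \<Longrightarrow> K * t + M \<noteq> 0"
  shows "(K * x + M \<le> 0) = (K * y + M \<le> 0)"
proof (rule ccontr)
  assume "\<not> ?thesis"
  then have "(K * x + M) * (K * y + M) \<le> 0" by (auto simp: mult_le_0_iff)
  then show False using affine_zero_between[OF assms(1)] assms(2) by blast
qed

lemma affine_nonpos_between:
  fixes K M x y z :: real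
  assumes "x \<le> y" "y \<le> z" "K * x + M \<le> 0" "K * z + M \<le> 0"
  shows "K * y + M \<le> 0"
  using assms mult_left_mono[of x y K] mult_left_mono[of y z K]
    mult_left_mono_neg[of x y K] mult_left_mono_neg[of y z K]
  by (cases "K \<ge> 0") linarith+

lemma affine_zero_on_segment:
  fixes K M x y z :: real
  assumes "x \<le> y" "y \<le> z" "K * x + M = 0" "K * z + M = 0"
  shows "K * y + M = 0"
  using affine_nonpos_between[OF assms(1,2), of K M]
    affine_nonpos_between[OF assms(1,2), of "- K" "- M"] assms(3,4)
  by simp

lemma affine_neg_between:
  fixes K M x y z :: real
  assumes "x \<le> y" "y \<le> z" "K * x + M < 0" "K * z + M < 0"
  shows "K * y + M < 0"
  using assms mult_left_mono[of x y K] mult_left_mono[of y z K]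
    mult_left_mono_neg[of x y K] mult_left_mono_neg[of y z K]
  by (cases "K \<ge> 0") linarith+

lemma affine_no_two_sign_changes:
  fixes K M x1 y1 x2 y2 :: real
  assumes "x1 < y1" "y1 \<le> x2" "x2 < y2"
    and "(K * x1 + M) * (K * y1 + M) < 0" "(K * x2 + M) * (K * y2 + M) < 0"
  shows False
proof -
  consider "K = 0" | "K > 0" | "K < 0" by linarith
  then show False
  proof cases
    case 1
    then show False using assms(4) by (simp add: mult_less_0_iff)
  next
    case 2
    then have "K * x1 < K * y1" "K * y1 \<le> K * x2" "K * x2 < K * y2" using assms(1-3) by auto
    then show False using assms(4,5) by (auto simp: mult_less_0_iff)
  next
    case 3
    then have "K * x1 > K * y1" "K * y1 \<ge> K * x2" "K * x2 > K * y2" using assms(1-3) by auto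
    then show False using assms(4,5) by (auto simp: mult_less_0_iff)
  qed
qed

lemma eventually_abs_le_stable:
  fixes g :: "real \<Rightarrow> real"
  assumes "(g \<longlongrightarrow> g x) F" "\<bar>g x\<bar> \<noteq> eps"
  shows "\<forall>\<^sub>F y in F. (\<bar>g y\<bar> \<le> eps) = (\<bar>g x\<bar> \<le> eps)"
proof -
  have abs: "((\<lambda>y. \<bar>g y\<bar>) \<longlongrightarrow> \<bar>g x\<bar>) F" using assms(1) by (rule tendsto_rabs)
  show ?thesis
  proof (cases "\<bar>g x\<bar> < eps")
    case True
    show ?thesis by (rule eventually_mono[OF order_tendstoD(2)[OF abs True]]) (use True in simp)
  next
    case False
    then have "eps < \<bar>g x\<bar>" using assms(2) by simp
    show ?thesis by (rule eventually_mono[OF order_tendstoD(1)[OF abs \<open>eps < \<bar>g x\<bar>\<close>]])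
      (use \<open>eps < \<bar>g x\<bar>\<close> in simp)
  qed
qed

lemma eventually_one_sided_in:
  fixes x :: real
  assumes "x \<in> {c<..<d}" "F = at_left x \<or> F = at_right x"
  shows "\<forall>\<^sub>F y in F. y \<in> {c<..<d}"
  using assms(2)
proof (elim disjE)
  show "F = at_left x \<Longrightarrow> ?thesis"
    using eventually_at_left_real[of c x] assms(1) by (auto elim!: eventually_mono)
  show "F = at_right x \<Longrightarrow> ?thesis"
    using eventually_at_right_real[of x d] assms(1) by (auto elim!: eventually_mono)
qed

lemma eventually_one_sided:
  fixes x :: real
  assumes "F = at_left x \<or> F = at_right x" "eventually P F"
  obtains c where "c \<noteq> x" "\<And>y. min x c < y \<Longrightarrow> y < max x c \<Longrightarrow> P y"
  using assms
proof (elim disjE)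
  assume "F = at_left x"
  then obtain c where "c < x" "\<And>y. c < y \<Longrightarrow> y < x \<Longrightarrow> P y"
    using assms(2) by (auto simp: eventually_at_left_field)
  then show thesis using that[of c] by auto
next
  assume "F = at_right x"
  then obtain c where "c > x" "\<And>y. x < y \<Longrightarrow> y < c \<Longrightarrow> P y"
    using assms(2) by (auto simp: eventually_at_right_field)
  then show thesis using that[of c] by auto
qed

section \<open>The upper envelope of finitely many lines\<close>

definition top_line :: "'a set \<Rightarrow> ('a \<Rightarrow> real) \<Rightarrow> ('a \<Rightarrow> real) \<Rightarrow> 'a \<Rightarrow> real \<Rightarrow> bool" where
  "top_line E k m q y \<longleftrightarrow> q \<in> E \<and> (\<forall>r\<in>E. k r * y + m r \<le> k q * y + m q)"

definition env_vertices :: "'a set \<Rightarrow> ('a \<Rightarrow> real) \<Rightarrow> ('a \<Rightarrow> real) \<Rightarrow> real set" where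
  "env_vertices E k m = {t. \<exists>u v. top_line E k m u t \<and> top_line E k m v t \<and> k u \<noteq> k v}"

lemma top_line_Max:
  assumes "finite E" "top_line E k m q y"
  shows "Max ((\<lambda>r. k r * y + m r) ` E) = k q * y + m q"
  using assms unfolding top_line_def by (intro Max_eqI) auto

lemma top_line_exists:
  assumes "finite E" "E \<noteq> {}"
  obtains q where "top_line E k m q y"
proof -
  obtain q where "is_arg_min (\<lambda>r. - (k r * y + m r)) (\<lambda>r. r \<in> E) q"
    using ex_is_arg_min_if_finite[OF assms] by blast
  then have "top_line E k m q y" by (fastforce simp: is_arg_min_linorder top_line_def)
  then show ?thesis by (rule that)
qed

lemma top_line_slope_extremal:
  assumes "finite E" "E \<noteq> {}"
  obtains u v where "top_line E k m u y" "\<And>w. top_line E k m w y \<Longrightarrow> k w \<le> k u"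
    "top_line E k m v y" "\<And>w. top_line E k m w y \<Longrightarrow> k v \<le> k w"
proof -
  define W where "W = {w. top_line E k m w y}"
  obtain q where "top_line E k m q y" using top_line_exists[OF assms] .
  then have W: "finite W" "W \<noteq> {}"
    using assms(1) unfolding W_def top_line_def by (auto intro: finite_subset)
  obtain u where "is_arg_min (\<lambda>w. - k w) (\<lambda>w. w \<in> W) u"
    using ex_is_arg_min_if_finite[OF W] by blast
  moreover obtain v where "is_arg_min k (\<lambda>w. w \<in> W) v"
    using ex_is_arg_min_if_finite[OF W] by blast
  ultimately show ?thesis using that by (auto simp: is_arg_min_linorder W_def)
qed

lemma top_line_slope_mono:
  assumes "top_line E k m u c" "top_line E k m v d" "c < d"
  shows "k u \<le> k v"
proof -
  have "k v * c + m v \<le> k u * c + m u" "k u * d + m u \<le> k v * d + m v"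
    using assms(1,2) unfolding top_line_def by auto
  then have "0 \<le> (k v - k u) * (d - c)" by (simp add: algebra_simps)
  with assms(3) show ?thesis by (simp add: zero_le_mult_iff)
qed

lemma env_vertices_finite_card:
  assumes "finite E"
  shows "finite (env_vertices E k m) \<and> card (env_vertices E k m) \<le> card E"
proof -
  define min_slope where "min_slope t = Min (k ` {q. top_line E k m q t})" for t
  have fin: "finite (k ` {q. top_line E k m q t})" for t
    using assms unfolding top_line_def by (auto intro: finite_subset)
  have min_slope_in: "min_slope t \<in> k ` {q. top_line E k m q t}" if "t \<in> env_vertices E k m" for t
    using that fin unfolding min_slope_def env_vertices_def by (intro Min_in) auto
  have mono: "min_slope t < min_slope t'"
    if t: "t \<in> env_vertices E k m" "t' \<in> env_vertices E k m" "t < t'" for t t'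
  proof -
    obtain u v where uv: "top_line E k m u t" "top_line E k m v t" "k u \<noteq> k v"
      using t(1) unfolding env_vertices_def by blast
    obtain w where w: "top_line E k m w t'" "min_slope t' = k w" using min_slope_in[OF t(2)] by auto
    have "min_slope t \<le> k u" "min_slope t \<le> k v"
      using uv fin unfolding min_slope_def by (auto intro!: Min_le)
    moreover have "k u \<le> k w" "k v \<le> k w" using top_line_slope_mono[OF _ w(1) t(3)] uv by auto
    ultimately show ?thesis using uv(3) w(2) by linarith
  qed
  have inj: "inj_on min_slope (env_vertices E k m)"
  proof (rule inj_onI)
    fix t t' assume "t \<in> env_vertices E k m" "t' \<in> env_vertices E k m" "min_slope t = min_slope t'"
    then show "t = t'" using mono[of t t'] mono[of t' t] by (cases t t' rule: linorder_cases) auto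
  qed
  have sub: "min_slope ` env_vertices E k m \<subseteq> k ` E"
    using min_slope_in unfolding top_line_def by fastforce
  have "finite (env_vertices E k m)"
    using finite_imageD[OF finite_subset[OF sub] inj] assms by blast
  moreover have "card (env_vertices E k m) \<le> card E"
    using card_image[OF inj] card_mono[OF _ sub] card_image_le[OF assms, of k] assms by fastforce
  ultimately show ?thesis ..
qed

lemma top_line_slope_less:
  assumes "top_line E k m u c" "top_line E k m w t" "c < t" "k u * t + m u < k w * t + m w"
  shows "k u < k w"
proof -
  have "k w * c + m w \<le> k u * c + m u" using assms(1,2) unfolding top_line_def by simp
  then have "k u \<noteq> k w" using assms(4) by auto
  then show ?thesis using top_line_slope_mono[OF assms(1-3)] by simp
qed

lemma top_line_slope_greater:
  assumes "top_line E k m w t" "top_line E k m v d" "t < d" "k v * t + m v < k w * t + m w"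
  shows "k w < k v"
proof -
  have "k w * d + m w \<le> k v * d + m v" using assms(1,2) unfolding top_line_def by simp
  then have "k w \<noteq> k v" using assms(4) by auto
  then show ?thesis using top_line_slope_mono[OF assms(1-3)] by simp
qed

lemma top_lines_cross_between:
  assumes "c < d"
    and u: "top_line E k m u c" "\<And>w. top_line E k m w c \<Longrightarrow> k w \<le> k u"
    and v: "top_line E k m v d" "\<And>w. top_line E k m w d \<Longrightarrow> k v \<le> k w"
    and "k u < k v"
  shows "\<exists>t\<in>{c<..<d}. k u * t + m u = k v * t + m v"
proof -
  have "u \<in> E" "v \<in> E" using u(1) v(1) unfolding top_line_def by auto
  have vc: "k v * c + m v < k u * c + m u"
  proof (rule ccontr)
    assume "\<not> ?thesis"
    then have "top_line E k m v c" using u(1) \<open>v \<in> E\<close> unfolding top_line_def by force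
    then show False using u(2) \<open>k u < k v\<close> by force
  qed
  have ud: "k u * d + m u < k v * d + m v"
  proof (rule ccontr)
    assume "\<not> ?thesis"
    then have "top_line E k m u d" using v(1) \<open>u \<in> E\<close> unfolding top_line_def by force
    then show False using v(2) \<open>k u < k v\<close> by force
  qed
  have "((k u - k v) * c + (m u - m v)) * ((k u - k v) * d + (m u - m v)) \<le> 0"
    using vc ud by (intro mult_nonneg_nonpos) (auto simp: algebra_simps)
  then obtain t where t: "t \<in> {c..d}" "(k u - k v) * t + (m u - m v) = 0"
    using affine_zero_between[OF less_imp_le[OF \<open>c < d\<close>]] by blast
  moreover have "t \<noteq> c" "t \<noteq> d" using t(2) vc ud by (auto simp: algebra_simps)
  ultimately show ?thesis by (auto simp: algebra_simps)
qed

text \<open>The two extreme top lines cross inside the interval. Either they are on top there, giving a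
  vertex, or a third line is on top, whose slope lies strictly between theirs.\<close>
lemma env_vertex_between:
  assumes fin: "finite E" and "c < d"
    and "top_line E k m u c" "\<And>w. top_line E k m w c \<Longrightarrow> k w \<le> k u"
    and "top_line E k m v d" "\<And>w. top_line E k m w d \<Longrightarrow> k v \<le> k w"
    and "k u < k v"
  shows "\<exists>t\<in>{c<..<d}. t \<in> env_vertices E k m"
  using assms(2-)
proof (induction "card {q\<in>E. k u \<le> k q \<and> k q \<le> k v}" arbitrary: d v rule: less_induct)
  case (less v d)
  obtain t where t: "c < t" "t < d" "k u * t + m u = k v * t + m v"
    using top_lines_cross_between[OF less.prems] by auto
  have "u \<in> E" "v \<in> E" using less.prems(2,4) unfolding top_line_def by auto
  obtain w where w: "top_line E k m w t" "\<And>w'. top_line E k m w' t \<Longrightarrow> k w \<le> k w'"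
    using top_line_slope_extremal[OF fin, of k m t] \<open>u \<in> E\<close> by (metis empty_iff)
  show ?case
  proof (cases "top_line E k m u t")
    case True
    moreover have "top_line E k m v t" using True t(3) \<open>v \<in> E\<close> unfolding top_line_def by simp
    ultimately have "t \<in> env_vertices E k m"
      using less_imp_neq[OF less.prems(6)] unfolding env_vertices_def by blast
    then show ?thesis using t by auto
  next
    case False
    then obtain r where "r \<in> E" "k u * t + m u < k r * t + m r"
      using \<open>u \<in> E\<close> unfolding top_line_def by (auto simp: not_le)
    then have ut: "k u * t + m u < k w * t + m w" using w(1) unfolding top_line_def by force
    have uw: "k u < k w" using top_line_slope_less[OF less.prems(2) w(1) t(1) ut] .
    have wv: "k w < k v" using top_line_slope_greater[OF w(1) less.prems(4) t(2)] ut t(3) by simp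
    have "{q\<in>E. k u \<le> k q \<and> k q \<le> k w} \<subset> {q\<in>E. k u \<le> k q \<and> k q \<le> k v}"
      using uw wv \<open>v \<in> E\<close> by force
    then have fewer: "card {q\<in>E. k u \<le> k q \<and> k q \<le> k w} < card {q\<in>E. k u \<le> k q \<and> k q \<le> k v}"
      using fin by (auto intro: psubset_card_mono)
    obtain t' where "t' \<in> {c<..<t}" "t' \<in> env_vertices E k m"
      using less.hyps[OF fewer t(1) less.prems(2,3) w uw] by blast
    then show ?thesis using t(2) by auto
  qed
qed

lemma top_line_between_vertices:
  assumes fin: "finite E" and ne: "E \<noteq> {}" and "c \<le> d" and free: "env_vertices E k m \<inter> {c<..<d} = {}"
  obtains u where "\<And>y. y \<in> {c..d} \<Longrightarrow> top_line E k m u y"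
proof -
  obtain u where uc: "top_line E k m u c" and ud: "top_line E k m u d"
  proof (cases "c = d")
    case True
    then show ?thesis using top_line_exists[OF fin ne] that by metis
  next
    case False
    with \<open>c \<le> d\<close> have "c < d" by simp
    obtain u where u: "top_line E k m u c" "\<And>w. top_line E k m w c \<Longrightarrow> k w \<le> k u"
      using top_line_slope_extremal[OF fin ne] by metis
    obtain v where v: "top_line E k m v d" "\<And>w. top_line E k m w d \<Longrightarrow> k v \<le> k w"
      using top_line_slope_extremal[OF fin ne] by metis
    have "\<not> k u < k v" using env_vertex_between[OF fin \<open>c < d\<close> u v] free by blast
    then have "k u = k v" using top_line_slope_mono[OF u(1) v(1) \<open>c < d\<close>] by simp
    moreover have "k v * c + m v \<le> k u * c + m u" "k u * d + m u \<le> k v * d + m v"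
      using u(1) v(1) unfolding top_line_def by auto
    ultimately have "top_line E k m u d" using u(1) v(1) unfolding top_line_def by auto
    then show ?thesis using that u(1) by blast
  qed
  have "top_line E k m u y" if y: "y \<in> {c..d}" for y
    unfolding top_line_def
  proof (intro conjI ballI)
    show "u \<in> E" using uc unfolding top_line_def by simp
    fix r assume "r \<in> E"
    then have "(k r - k u) * c + (m r - m u) \<le> 0" "(k r - k u) * d + (m r - m u) \<le> 0"
      using uc ud unfolding top_line_def by (auto simp: algebra_simps)
    then have "(k r - k u) * y + (m r - m u) \<le> 0"
      using affine_nonpos_between y by auto
    then show "k r * y + m r \<le> k u * y + m u" by (simp add: algebra_simps)
  qed
  then show ?thesis using that by blast
qed

lemma tendsto_Max_finite:
  fixes f :: "'a \<Rightarrow> 'b \<Rightarrow> real"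
  assumes "finite E" "E \<noteq> {}" "\<And>q. q \<in> E \<Longrightarrow> (f q \<longlongrightarrow> l q) F"
  shows "((\<lambda>y. Max ((\<lambda>q. f q y) ` E)) \<longlongrightarrow> Max (l ` E)) F"
  using assms
proof (induction E rule: finite_ne_induct)
  case (insert q E)
  then show ?case by (simp add: Max_insert tendsto_max)
qed simp

lemma tendsto_Min_finite:
  fixes f :: "'a \<Rightarrow> 'b \<Rightarrow> real"
  assumes "finite E" "E \<noteq> {}" "\<And>q. q \<in> E \<Longrightarrow> (f q \<longlongrightarrow> l q) F"
  shows "((\<lambda>y. Min ((\<lambda>q. f q y) ` E)) \<longlongrightarrow> Min (l ` E)) F"
  using assms
proof (induction E rule: finite_ne_induct)
  case (insert q E)
  then show ?case by (simp add: Min_insert tendsto_min)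
qed simp

section \<open>Counting on finite sets of reals\<close>

lemma card_le_2_if_no_increasing_triple:
  fixes A :: "'a::linorder set"
  assumes "finite A" and no3: "\<And>x y z. x \<in> A \<Longrightarrow> y \<in> A \<Longrightarrow> z \<in> A \<Longrightarrow> x < y \<Longrightarrow> y < z \<Longrightarrow> False"
  shows "card A \<le> 2"
proof (rule ccontr)
  assume "\<not> card A \<le> 2"
  then obtain T where "T \<subseteq> A" "card T = 3" using obtain_subset_with_card_n[of 3 A] by force
  then obtain x y z where "x \<in> A" "y \<in> A" "z \<in> A" "x \<noteq> y" "y \<noteq> z" "x \<noteq> z"
    by (auto simp: card_3_iff)
  then show False
    using no3[of x y z] no3[of x z y] no3[of y x z] no3[of y z x] no3[of z x y] no3[of z y x]
    by (auto simp: neq_iff dest: less_trans)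
qed

definition succ_in :: "real set \<Rightarrow> real \<Rightarrow> real" where
  "succ_in D x = Min {y\<in>D. x < y}"

lemma succ_in:
  assumes "finite D" "x \<in> D" "x < Max D"
  shows "succ_in D x \<in> D" "x < succ_in D x" "\<And>z. z \<in> D \<Longrightarrow> x < z \<Longrightarrow> succ_in D x \<le> z"
proof -
  have "Max D \<in> D" using assms(1,2) by (intro Max_in) auto
  then have ne: "{y\<in>D. x < y} \<noteq> {}" using assms(3) by blast
  have fin: "finite {y\<in>D. x < y}" using assms(1) by simp
  show "succ_in D x \<in> D" "x < succ_in D x" using Min_in[OF fin ne] unfolding succ_in_def by auto
  show "\<And>z. z \<in> D \<Longrightarrow> x < z \<Longrightarrow> succ_in D x \<le> z" unfolding succ_in_def using fin by (intro Min_le) auto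
qed

definition gaps_meeting :: "real set \<Rightarrow> real set \<Rightarrow> real set" where
  "gaps_meeting D Ev = {x\<in>D. x < Max D \<and> Ev \<inter> {x..succ_in D x} \<noteq> {}}"

definition sign_change_gaps :: "real set \<Rightarrow> real set \<Rightarrow> (real \<Rightarrow> real) \<Rightarrow> real set" where
  "sign_change_gaps D V g = {x\<in>D. x < Max D \<and> V \<inter> {x<..<succ_in D x} = {} \<and> g x * g (succ_in D x) < 0}"

lemma card_gaps_meeting_le:
  assumes fD: "finite D" and fEv: "finite Ev"
  shows "card (gaps_meeting D Ev) \<le> 2 * card Ev"
proof -
  define T where "T e = {x\<in>D. x < Max D \<and> x \<le> e \<and> e \<le> succ_in D x}" for e
  have fT: "finite (T e)" for e unfolding T_def using fD by simp
  have "card (T e) \<le> 2" for e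
  proof (rule card_le_2_if_no_increasing_triple[OF fT])
    fix x y z assume "x \<in> T e" "y \<in> T e" "z \<in> T e" "x < y" "y < z"
    moreover from this have "succ_in D x \<le> y" using succ_in(3)[OF fD] unfolding T_def by blast
    ultimately show False unfolding T_def by auto
  qed
  then have "(\<Sum>e\<in>Ev. card (T e)) \<le> 2 * card Ev"
    using sum_mono[of Ev "\<lambda>e. card (T e)" "\<lambda>_. 2"] by simp
  moreover have "gaps_meeting D Ev \<subseteq> (\<Union>e\<in>Ev. T e)"
    unfolding gaps_meeting_def T_def by auto
  then have "card (gaps_meeting D Ev) \<le> card (\<Union>e\<in>Ev. T e)"
    using fEv fT by (intro card_mono) auto
  moreover have "card (\<Union>e\<in>Ev. T e) \<le> (\<Sum>e\<in>Ev. card (T e))" by (rule card_UN_le[OF fEv])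
  ultimately show ?thesis by linarith
qed

lemma card_sign_changes_le:
  fixes g :: "real \<Rightarrow> real"
  assumes fD: "finite D" and fV: "finite V"
    and affine: "\<And>c d. c \<le> d \<Longrightarrow> V \<inter> {c<..<d} = {} \<Longrightarrow> \<exists>K M. \<forall>y\<in>{c..d}. g y = K * y + M"
  shows "card (sign_change_gaps D V g) \<le> card V + 1"
proof -
  define X where "X = sign_change_gaps D V g"
  define rank where "rank x = card {v\<in>V. v \<le> x}" for x
  have rank_strict: "rank x1 \<noteq> rank x2" if "x1 \<in> X" "x2 \<in> X" "x1 < x2" for x1 x2
  proof
    assume eq: "rank x1 = rank x2"
    have h1: "x1 \<in> D" "x1 < Max D" "g x1 * g (succ_in D x1) < 0"
      using that(1) unfolding X_def sign_change_gaps_def by auto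
    have h2: "x2 \<in> D" "x2 < Max D" "V \<inter> {x2<..<succ_in D x2} = {}" "g x2 * g (succ_in D x2) < 0"
      using that(2) unfolding X_def sign_change_gaps_def by auto
    have n1: "x1 < succ_in D x1" "succ_in D x1 \<le> x2"
      using succ_in[OF fD h1(1,2)] h2(1) that(3) by auto
    have n2: "x2 < succ_in D x2" using succ_in[OF fD h2(1,2)] by auto
    have "{v\<in>V. v \<le> x1} = {v\<in>V. v \<le> x2}"
      using eq fV that(3) unfolding rank_def by (intro card_subset_eq) auto
    then have "V \<inter> {x1<..x2} = {}" by (force simp: set_eq_iff)
    then have "V \<inter> {x1<..<succ_in D x2} = {}" using h2(3) by (force simp: not_le)
    then obtain K M where "\<forall>y\<in>{x1..succ_in D x2}. g y = K * y + M"
      using affine[of x1 "succ_in D x2"] n1 n2 by force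
    then have "(K * x1 + M) * (K * succ_in D x1 + M) < 0" "(K * x2 + M) * (K * succ_in D x2 + M) < 0"
      using h1(3) h2(4) n1 n2 by auto
    then show False using affine_no_two_sign_changes[OF n1 n2] by blast
  qed
  have "inj_on rank X"
  proof (rule inj_onI)
    fix x y assume "x \<in> X" "y \<in> X" "rank x = rank y"
    then show "x = y" using rank_strict[of x y] rank_strict[of y x]
      by (cases x y rule: linorder_cases) auto
  qed
  then have "card X = card (rank ` X)" by (simp add: card_image)
  also have "\<dots> \<le> card {0..card V}"
    unfolding rank_def using fV by (intro card_mono) (auto intro: card_mono)
  finally show ?thesis unfolding X_def by simp
qed

section \<open>Connectivity classes and component pairs\<close>

lemma time_vertices_mono:
  assumes "time_vertices_ok tv tau" "j \<le> l" "l \<le> tau"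
  shows "tv j \<le> tv l"
  using assms(2,3)
proof (induction l)
  case (Suc l)
  show ?case
  proof (cases "j = Suc l")
    case False
    then have "tv j \<le> tv l" using Suc by simp
    also have "tv l < tv (Suc l)" using assms(1) Suc.prems unfolding time_vertices_ok_def by simp
    finally show ?thesis by simp
  qed simp
qed simp

definition link_rel :: "nat \<Rightarrow> (nat \<Rightarrow> real \<Rightarrow> real) \<Rightarrow> real \<Rightarrow> real \<Rightarrow> (nat \<times> nat) set" where
  "link_rel n traj eps x = {(p, q). p \<in> entities n \<and> q \<in> entities n \<and> \<bar>traj p x - traj q x\<bar> \<le> eps}"

lemma eps_connected_iff:
  "eps_connected n traj eps x a b \<longleftrightarrow> a \<in> entities n \<and> b \<in> entities n \<and> (a, b) \<in> (link_rel n traj eps x)\<^sup>*"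
  unfolding eps_connected_def link_rel_def ..

lemma eps_connected_sym: "eps_connected n traj eps x a b \<Longrightarrow> eps_connected n traj eps x b a"
proof -
  have "sym (link_rel n traj eps x)"
    unfolding link_rel_def sym_def by (auto simp: abs_minus_commute)
  then show "eps_connected n traj eps x a b \<Longrightarrow> eps_connected n traj eps x b a"
    unfolding eps_connected_iff using sym_rtrancl unfolding sym_def by blast
qed

lemma eps_connected_trans:
  "eps_connected n traj eps x a b \<Longrightarrow> eps_connected n traj eps x b c \<Longrightarrow> eps_connected n traj eps x a c"
  unfolding eps_connected_iff by auto

lemma conn_class_eq:
  assumes "A \<in> conn_classes n traj eps x" "s \<in> A"
  shows "A = {c. eps_connected n traj eps x s c}"
proof -
  obtain r where A: "A = {c. eps_connected n traj eps x r c}"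
    using assms(1) unfolding conn_classes_def by blast
  with assms(2) have rs: "eps_connected n traj eps x r s" by simp
  show ?thesis
    unfolding A using eps_connected_trans[OF rs] eps_connected_trans[OF eps_connected_sym[OF rs]]
    by blast
qed

lemma conn_class_subset: "A \<in> conn_classes n traj eps x \<Longrightarrow> A \<subseteq> entities n"
  unfolding conn_classes_def eps_connected_def by auto

lemma conn_class_unique:
  "A \<in> conn_classes n traj eps x \<Longrightarrow> A' \<in> conn_classes n traj eps x \<Longrightarrow> s \<in> A \<Longrightarrow> s \<in> A' \<Longrightarrow> A = A'"
  using conn_class_eq[of A n traj eps x s] conn_class_eq[of A' n traj eps x s] by simp

lemma conn_classes_cong:
  "link_rel n traj eps x = link_rel n traj eps y \<Longrightarrow> conn_classes n traj eps x = conn_classes n traj eps y"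
  unfolding conn_classes_def eps_connected_iff by simp

text \<open>A class cannot jump over an entity: the link crossing the gap would also reach it.\<close>
lemma conn_class_no_gap:
  assumes A: "A \<in> conn_classes n traj eps x" and "s \<in> A" "p \<in> A"
    and split: "\<forall>c\<in>A. traj c x \<le> lo \<or> hi \<le> traj c x" and "traj s x \<le> lo" "hi \<le> traj p x"
    and q: "q \<in> entities n" "lo < traj q x" "traj q x < hi"
  shows False
proof -
  have "q \<notin> A" using split q by force
  have "traj c x \<le> lo" if "(s, c) \<in> (link_rel n traj eps x)\<^sup>*" for c
    using that
  proof (induction rule: rtrancl_induct)
    case (step r c)
    have "c \<in> A" using conn_class_eq[OF A \<open>s \<in> A\<close>] step.hyps \<open>s \<in> A\<close> conn_class_subset[OF A]
      unfolding eps_connected_iff link_rel_def by (auto intro: rtrancl_into_rtrancl)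
    show ?case
    proof (rule ccontr)
      assume "\<not> traj c x \<le> lo"
      then have "hi \<le> traj c x" using split \<open>c \<in> A\<close> by auto
      moreover have "r \<in> entities n" "\<bar>traj r x - traj c x\<bar> \<le> eps"
        using step.hyps(2) unfolding link_rel_def by auto
      ultimately have "(r, q) \<in> link_rel n traj eps x"
        using q step.IH unfolding link_rel_def by auto
      then have "(s, q) \<in> (link_rel n traj eps x)\<^sup>*" using step.hyps(1) by simp
      then have "q \<in> A" using conn_class_eq[OF A \<open>s \<in> A\<close>] \<open>s \<in> A\<close> conn_class_subset[OF A] q(1)
        unfolding eps_connected_iff by auto
      then show False using \<open>q \<notin> A\<close> by simp
    qed
  qed (use \<open>traj s x \<le> lo\<close> in simp)
  moreover have "(s, p) \<in> (link_rel n traj eps x)\<^sup>*"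
    using conn_class_eq[OF A \<open>s \<in> A\<close>] \<open>p \<in> A\<close> unfolding eps_connected_iff by auto
  ultimately show False using q \<open>hi \<le> traj p x\<close> by fastforce
qed

lemma is_real_interval_Un:
  assumes J: "is_real_interval J" and K: "is_real_interval K" and "x \<in> J" "x \<in> K"
  shows "is_real_interval (J \<union> K)"
  unfolding is_real_interval_def
proof (intro ballI subsetI)
  fix p q z assume p: "p \<in> J \<union> K" and q: "q \<in> J \<union> K" and z: "z \<in> {p..q}"
  have "{p..x} \<subseteq> J \<union> K" "{x..q} \<subseteq> J \<union> K"
    using p q J K assms(3,4) unfolding is_real_interval_def by blast+
  moreover have "z \<in> {p..x} \<or> z \<in> {x..q}" using z by auto
  ultimately show "z \<in> J \<union> K" by blast
qed

lemma component_pair_class: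
  "component_pair n traj tv tau eps A J \<Longrightarrow> x \<in> J \<Longrightarrow> A \<in> conn_classes n traj eps x"
  unfolding component_pair_def by auto

lemma component_pair_absorbs:
  assumes C: "component_pair n traj tv tau eps A J" and "x \<in> J" "x \<in> K"
    and "is_real_interval K" "K \<subseteq> {tv 0..tv tau}" "\<forall>y\<in>K. A \<in> conn_classes n traj eps y"
  shows "K \<subseteq> J"
proof -
  have J: "is_real_interval J" "J \<subseteq> {tv 0..tv tau}" "\<forall>y\<in>J. A \<in> conn_classes n traj eps y"
    using C unfolding component_pair_def by auto
  have "is_real_interval (J \<union> K)" using is_real_interval_Un[OF J(1) assms(4,2,3)] .
  moreover have "J \<union> K \<subseteq> {tv 0..tv tau}" "\<forall>y\<in>J \<union> K. A \<in> conn_classes n traj eps y"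
    using J assms(5,6) by auto
  ultimately have "J \<union> K = J" using C unfolding component_pair_def by blast
  then show ?thesis by blast
qed

lemma component_pair_unique:
  assumes C: "component_pair n traj tv tau eps A J" and C': "component_pair n traj tv tau eps A J'"
    and "x \<in> J" "x \<in> J'"
  shows "J = J'"
proof -
  have "J' \<subseteq> J" using component_pair_absorbs[OF C assms(3,4)] C'
    unfolding component_pair_def by blast
  moreover have "J \<subseteq> J'" using component_pair_absorbs[OF C' assms(4,3)] C
    unfolding component_pair_def by blast
  ultimately show ?thesis by blast
qed

lemma inj_on_snd_segment_break_points: "inj_on snd (segment_break_points n traj tv tau eps i)"
proof (rule inj_onI)
  fix u v assume u: "u \<in> segment_break_points n traj tv tau eps i"
    and v: "v \<in> segment_break_points n traj tv tau eps i" and eq: "snd u = snd v"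
  obtain A J x s p where u_eq: "u = ((A, J), (x, s, p))" by (metis prod.collapse)
  obtain A' J' where v_eq: "v = ((A', J'), (x, s, p))"
    using eq u_eq by (metis prod.collapse snd_conv)
  have C: "component_pair n traj tv tau eps A J" "x \<in> J" "s \<in> A"
    using u unfolding u_eq segment_break_points_def break_points_def by auto
  have C': "component_pair n traj tv tau eps A' J'" "x \<in> J'" "s \<in> A'"
    using v unfolding v_eq segment_break_points_def break_points_def by auto
  have "A = A'"
    using conn_class_unique[OF component_pair_class[OF C(1,2)]
      component_pair_class[OF C'(1,2)] C(3) C'(3)] .
  moreover have "J = J'" using component_pair_unique[OF C(1) C'(1)[folded calculation] C(2) C'(2)] .
  ultimately show "u = v" using u_eq v_eq by simp
qed

section \<open>Lines on one time segment\<close>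

locale linear_segment =
  fixes n :: nat and traj :: "nat \<Rightarrow> real \<Rightarrow> real" and tv :: "nat \<Rightarrow> real" and tau :: nat
    and eps :: real and i :: nat and k m :: "nat \<Rightarrow> real"
  assumes eps_pos: "eps > 0" and tv_ok: "time_vertices_ok tv tau"
    and general: "general_position n traj tv tau eps" and i_less: "i < tau"
    and traj_affine: "\<And>s x. s \<in> entities n \<Longrightarrow> x \<in> {tv i..tv (Suc i)} \<Longrightarrow> traj s x = k s * x + m s"
begin

abbreviation "a \<equiv> tv i"
abbreviation "b \<equiv> tv (Suc i)"
abbreviation "E \<equiv> entities n"

definition line :: "nat \<Rightarrow> real \<Rightarrow> real" where
  "line s x = k s * x + m s"

definition mid :: "real \<Rightarrow> real" where
  "mid x = (Max ((\<lambda>s. line s x) ` E) + Min ((\<lambda>s. line s x) ` E)) / 2"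

definition mid_dist :: "nat \<Rightarrow> real \<Rightarrow> real" where
  "mid_dist s x = \<bar>line s x - mid x\<bar>"

lemma finite_E [simp]: "finite E" and card_E [simp]: "card E = n"
  unfolding entities_def by simp_all

lemma a_less_b: "a < b"
  using tv_ok i_less unfolding time_vertices_ok_def by simp

lemma segment_in_domain: "{a..b} \<subseteq> {tv 0..tv tau}"
  using time_vertices_mono[OF tv_ok, of 0 i] time_vertices_mono[OF tv_ok, of "Suc i" tau] i_less
  by auto

lemma traj_eq_line: "s \<in> E \<Longrightarrow> x \<in> {a..b} \<Longrightarrow> traj s x = line s x"
  unfolding line_def by (rule traj_affine)

lemma centre_eq_mid:
  assumes "x \<in> {a..b}"
  shows "centre n traj x = mid x"
proof -
  have "(\<lambda>s. traj s x) ` E = (\<lambda>s. line s x) ` E" using traj_eq_line[OF _ assms] by simp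
  then show ?thesis unfolding centre_def mid_def by simp
qed

lemma fdist_eq_mid_dist: "s \<in> E \<Longrightarrow> x \<in> {a..b} \<Longrightarrow> fdist n traj s x = mid_dist s x"
  unfolding fdist_def mid_dist_def using centre_eq_mid traj_eq_line by simp

lemma line_diff: "line u t - line v t = (k u - k v) * t + (m u - m v)"
  unfolding line_def by (simp add: algebra_simps)

lemma tendsto_line: "((\<lambda>y. line s y) \<longlongrightarrow> line s x) (at x within X)"
  unfolding line_def by (intro tendsto_intros)

lemma lines_meet_once:
  assumes "line s \<noteq> line p" "line s x = line p x" "line s x' = line p x'"
  shows "x = x'"
proof -
  have "k s \<noteq> k p"
  proof
    assume "k s = k p"
    then have "m s = m p" using assms(2) unfolding line_def by simp
    with \<open>k s = k p\<close> show False using assms(1) unfolding line_def by auto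
  qed
  moreover have "(k s - k p) * (x - x') = 0"
    using assms(2,3) unfolding line_def by (simp add: algebra_simps)
  ultimately show ?thesis by simp
qed

lemma no_three_lines_meet:
  assumes x: "x \<in> {a..b}" and uvw: "u \<in> E" "v \<in> E" "w \<in> E" "u \<noteq> v" "v \<noteq> w" "u \<noteq> w"
    and "line u x = line v x" "line v x = line w x"
  shows False
proof -
  have "x \<in> {tv 0..tv tau}" using x segment_in_domain by blast
  note gp = conjunct1[OF bspec[OF general[unfolded general_position_def] this], rule_format]
  have "\<not> (traj u x = traj v x \<and> traj v x = traj w x)" using gp[OF uvw(1-3)] uvw(4-6) by blast
  then show False using assms(8,9) traj_eq_line[OF _ x] uvw(1-3) by simp
qed

lemma eps_pair_unique:
  assumes x: "x \<in> {a..b}" and uvwz: "u \<in> E" "v \<in> E" "w \<in> E" "z \<in> E" "u \<noteq> v" "w \<noteq> z"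
    and "\<bar>line u x - line v x\<bar> = eps" "\<bar>line w x - line z x\<bar> = eps"
  shows "{u, v} = {w, z}"
proof (rule ccontr)
  assume "{u, v} \<noteq> {w, z}"
  moreover have "x \<in> {tv 0..tv tau}" using x segment_in_domain by blast
  note gp = conjunct2[OF bspec[OF general[unfolded general_position_def] this], rule_format]
  ultimately have "\<not> (\<bar>traj u x - traj v x\<bar> = eps \<and> \<bar>traj w x - traj z x\<bar> = eps)"
    using gp[OF uvwz(1-4)] uvwz(5,6) by blast
  then show False using assms(8,9) traj_eq_line[OF _ x] uvwz(1-4) by simp
qed

lemma card_lines_through_le_2:
  assumes "x \<in> {a..b}"
  shows "card {q\<in>E. line q x = c} \<le> 2"
proof (rule card_le_2_if_no_increasing_triple)
  fix u v w assume "u \<in> {q\<in>E. line q x = c}" "v \<in> {q\<in>E. line q x = c}" "w \<in> {q\<in>E. line q x = c}"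
    "u < v" "v < w"
  then show False using no_three_lines_meet[OF assms, of u v w] by simp
qed simp

lemma card_equidistant_le_4:
  assumes "x \<in> {a..b}"
  shows "card {q\<in>E. mid_dist q x = f} \<le> 4"
proof -
  have "{q\<in>E. mid_dist q x = f} \<subseteq> {q\<in>E. line q x = mid x + f} \<union> {q\<in>E. line q x = mid x - f}"
    unfolding mid_dist_def by auto
  then have "card {q\<in>E. mid_dist q x = f} \<le>
    card ({q\<in>E. line q x = mid x + f} \<union> {q\<in>E. line q x = mid x - f})"
    by (intro card_mono) auto
  also have "\<dots> \<le> card {q\<in>E. line q x = mid x + f} + card {q\<in>E. line q x = mid x - f}"
    by (rule card_Un_le)
  finally show ?thesis
    using card_lines_through_le_2[OF assms, of "mid x + f"]
      card_lines_through_le_2[OF assms, of "mid x - f"]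
    by linarith
qed

text \<open>The minimum of the lines is minus the upper envelope of the negated lines, so mid
  is affine between consecutive kink times.\<close>
definition kink_times :: "real set" where
  "kink_times = env_vertices E k m \<union> env_vertices E (\<lambda>s. - k s) (\<lambda>s. - m s)"

lemma kink_times_finite_card: "finite kink_times \<and> card kink_times \<le> 2 * n"
  using env_vertices_finite_card[OF finite_E, of k m]
    env_vertices_finite_card[OF finite_E, of "\<lambda>s. - k s" "\<lambda>s. - m s"]
    card_Un_le[of "env_vertices E k m" "env_vertices E (\<lambda>s. - k s) (\<lambda>s. - m s)"]
  unfolding kink_times_def by auto

lemma mid_affine:
  assumes "c \<le> d" "kink_times \<inter> {c<..<d} = {}"
  shows "\<exists>K M. \<forall>y\<in>{c..d}. mid y = K * y + M"
proof (cases "E = {}")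
  case True
  then show ?thesis unfolding mid_def by (intro exI[of _ 0] exI[of _ "(Max {} + Min {}) / 2"]) simp
next
  case False
  have "env_vertices E k m \<inter> {c<..<d} = {}" "env_vertices E (\<lambda>s. - k s) (\<lambda>s. - m s) \<inter> {c<..<d} = {}"
    using assms(2) unfolding kink_times_def by blast+
  then obtain u v where u: "\<And>y. y \<in> {c..d} \<Longrightarrow> top_line E k m u y"
    and v: "\<And>y. y \<in> {c..d} \<Longrightarrow> top_line E (\<lambda>s. - k s) (\<lambda>s. - m s) v y"
    using top_line_between_vertices[OF finite_E False assms(1)] by metis
  have "mid y = ((k u + k v) / 2) * y + (m u + m v) / 2" if y: "y \<in> {c..d}" for y
  proof -
    have "Max ((\<lambda>s. line s y) ` E) = line u y"
      using top_line_Max[OF finite_E u[OF y]] unfolding line_def .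
    moreover have "Min ((\<lambda>s. line s y) ` E) = line v y"
      using v[OF y] unfolding top_line_def line_def by (intro Min_eqI) auto
    ultimately show ?thesis unfolding mid_def line_def by (simp add: field_simps)
  qed
  then show ?thesis by blast
qed

lemma tendsto_mid: "(mid \<longlongrightarrow> mid x) (at x within X)"
proof (cases "E = {}")
  case False
  have "((\<lambda>y. Max ((\<lambda>s. line s y) ` E)) \<longlongrightarrow> Max ((\<lambda>s. line s x) ` E)) (at x within X)"
    using tendsto_Max_finite[OF finite_E False, of line "\<lambda>s. line s x"] tendsto_line by blast
  moreover have "((\<lambda>y. Min ((\<lambda>s. line s y) ` E)) \<longlongrightarrow> Min ((\<lambda>s. line s x) ` E)) (at x within X)"
    using tendsto_Min_finite[OF finite_E False, of line "\<lambda>s. line s x"] tendsto_line by blast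
  ultimately show ?thesis unfolding mid_def by (intro tendsto_intros) auto
qed (simp add: mid_def[abs_def])

lemma tendsto_mid_dist: "((\<lambda>y. mid_dist s y) \<longlongrightarrow> mid_dist s x) (at x within X)"
  unfolding mid_dist_def by (intro tendsto_intros tendsto_line tendsto_mid)

lemma eventually_mid_dist_less:
  assumes "finite Q" "\<forall>q\<in>Q. mid_dist s x < mid_dist q x"
  shows "\<forall>\<^sub>F y in at x within X. \<forall>q\<in>Q. mid_dist s y < mid_dist q y"
proof -
  have "\<forall>\<^sub>F y in at x within X. mid_dist s y < mid_dist q y" if "q \<in> Q" for q
  proof -
    have "((\<lambda>y. mid_dist q y - mid_dist s y) \<longlongrightarrow> mid_dist q x - mid_dist s x) (at x within X)"
      by (intro tendsto_diff tendsto_mid_dist)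
    moreover have "0 < mid_dist q x - mid_dist s x" using assms(2) that by simp
    ultimately show ?thesis by (rule eventually_mono[OF order_tendstoD(1)]) simp
  qed
  then show ?thesis using assms(1) by (simp add: eventually_ball_finite_distrib)
qed

definition level_times :: "real \<Rightarrow> real set" where
  "level_times c = {t. \<exists>u\<in>E. \<exists>v\<in>E. k u \<noteq> k v \<and> line u t - line v t = c}"

lemma level_times_finite_card: "finite (level_times c) \<and> card (level_times c) \<le> n\<^sup>2"
proof -
  let ?root = "\<lambda>(u, v). (c - (m u - m v)) / (k u - k v)"
  have sub: "level_times c \<subseteq> ?root ` (E \<times> E)"
  proof
    fix t assume "t \<in> level_times c"
    then obtain u v where uv: "u \<in> E" "v \<in> E" "k u \<noteq> k v" "(k u - k v) * t + (m u - m v) = c"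
      unfolding level_times_def line_diff by blast
    then have "t = ?root (u, v)" by (simp add: field_simps)
    then show "t \<in> ?root ` (E \<times> E)" using uv(1,2) by blast
  qed
  have "card (?root ` (E \<times> E)) \<le> n\<^sup>2"
    using card_image_le[of "E \<times> E" ?root] by (simp add: card_cartesian_product power2_eq_square)
  then show ?thesis using sub card_mono[OF _ sub] finite_subset[OF sub] by simp
qed

definition event_times :: "real set" where
  "event_times = level_times 0 \<union> level_times eps \<union> kink_times"

lemma event_times_finite_card: "finite event_times \<and> card event_times \<le> 2 * n\<^sup>2 + 2 * n"
  using level_times_finite_card[of 0] level_times_finite_card[of eps] kink_times_finite_card
    card_Un_le[of "level_times 0 \<union> level_times eps" kink_times] card_Un_le[of "level_times 0" "level_times eps"]
  unfolding event_times_def by auto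

lemma same_line_if_order_swaps:
  assumes "x \<le> y" "level_times 0 \<inter> {x..y} = {}" "u \<in> E" "v \<in> E"
    and "line u x \<le> line v x" "line v y \<le> line u y"
  shows "line u = line v"
proof -
  have "k u = k v"
  proof (rule ccontr)
    assume "k u \<noteq> k v"
    have "((k u - k v) * x + (m u - m v)) * ((k u - k v) * y + (m u - m v)) \<le> 0"
      using assms(5,6) by (intro mult_nonpos_nonneg) (simp_all add: line_diff[symmetric])
    then obtain t where "t \<in> {x..y}" "line u t - line v t = 0"
      using affine_zero_between[OF assms(1)] unfolding line_diff by blast
    then show False using assms(2-4) \<open>k u \<noteq> k v\<close> unfolding level_times_def by blast
  qed
  moreover from this have "m u = m v" using assms(5,6) unfolding line_def by simp
  ultimately show ?thesis by (intro ext) (simp add: line_def)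
qed

definition links :: "real \<Rightarrow> (nat \<times> nat) set" where
  "links x = {(u, v). u \<in> E \<and> v \<in> E \<and> \<bar>line u x - line v x\<bar> \<le> eps}"

lemma conn_classes_eq_if_links_eq:
  assumes "x \<in> {a..b}" "y \<in> {a..b}" "links x = links y"
  shows "conn_classes n traj eps x = conn_classes n traj eps y"
proof (rule conn_classes_cong)
  have "link_rel n traj eps z = links z" if "z \<in> {a..b}" for z
    unfolding link_rel_def links_def using traj_eq_line[OF _ that] by auto
  then show "link_rel n traj eps x = link_rel n traj eps y" using assms by simp
qed

lemma links_const:
  assumes "x \<le> y" "level_times eps \<inter> {x..y} = {}"
  shows "links x = links y"
proof -
  have "(\<bar>line u x - line v x\<bar> \<le> eps) = (\<bar>line u y - line v y\<bar> \<le> eps)" if uv: "u \<in> E" "v \<in> E" for u v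
  proof (cases "k u = k v")
    case True
    then show ?thesis by (simp add: line_diff)
  next
    case False
    have "line u t - line v t \<noteq> eps" "line v t - line u t \<noteq> eps" if "t \<in> {x..y}" for t
    proof -
      have "t \<notin> level_times eps" using assms(2) that by blast
      then show "line u t - line v t \<noteq> eps" "line v t - line u t \<noteq> eps"
        using uv False not_sym[OF False] unfolding level_times_def by blast+
    qed
    then have "((k u - k v) * x + (m u - m v - eps) \<le> 0) = ((k u - k v) * y + (m u - m v - eps) \<le> 0)"
      "((k v - k u) * x + (m v - m u - eps) \<le> 0) = ((k v - k u) * y + (m v - m u - eps) \<le> 0)"
      by (intro affine_sign_stable[OF assms(1)]; simp add: line_diff algebra_simps)+
    then show ?thesis by (simp add: line_diff abs_le_iff algebra_simps)
  qed
  then show ?thesis unfolding links_def by auto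
qed

lemma eventually_links_eq_iff:
  "(\<forall>\<^sub>F y in F. links y = links x) \<longleftrightarrow>
   (\<forall>u\<in>E. \<forall>v\<in>E. \<forall>\<^sub>F y in F. (\<bar>line u y - line v y\<bar> \<le> eps) = (\<bar>line u x - line v x\<bar> \<le> eps))"
proof -
  have "links y = links x \<longleftrightarrow>
    (\<forall>u\<in>E. \<forall>v\<in>E. (\<bar>line u y - line v y\<bar> \<le> eps) = (\<bar>line u x - line v x\<bar> \<le> eps))" for y
    unfolding links_def by (auto simp: set_eq_iff)
  then show ?thesis by (simp add: eventually_ball_finite_distrib)
qed

lemma eventually_eps_pair_within:
  assumes "line u x - line v x = eps"
  shows "\<forall>\<^sub>F y in (if k u \<le> k v then at_right x else at_left x). \<bar>line u y - line v y\<bar> \<le> eps"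
proof -
  let ?F = "if k u \<le> k v then at_right x else at_left x"
  have diff: "line u y - line v y = eps + (k u - k v) * (y - x)" for y
    using assms unfolding line_def by (simp add: algebra_simps)
  have "\<forall>\<^sub>F y in ?F. (k u - k v) * (y - x) \<le> 0"
  proof (cases "k u \<le> k v")
    case True
    then show ?thesis
      by (simp add: eventually_mono[OF eventually_at_right_less] mult_nonpos_nonneg)
  next
    case False
    have "\<forall>\<^sub>F y in at_left x. y < x" by (simp add: eventually_at_filter)
    then show ?thesis using False by (auto elim!: eventually_mono simp: mult_nonneg_nonpos)
  qed
  moreover have "\<forall>\<^sub>F y in ?F. - eps < line u y - line v y"
    using order_tendstoD(1)[OF tendsto_diff[OF tendsto_line tendsto_line]] assms eps_pos by simp
  ultimately show ?thesis by eventually_elim (simp add: diff abs_le_iff)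
qed

text \<open>By general position at most one pair is at distance exactly eps at time x; it stays within
  eps on one side, and every other link is stable on both sides.\<close>
lemma eventually_links_stable:
  assumes x: "x \<in> {a..b}"
  obtains F where "F = at_left x \<or> F = at_right x" "\<forall>\<^sub>F y in F. links y = links x"
proof -
  have stable: "\<forall>\<^sub>F y in at x within X. (\<bar>line u y - line v y\<bar> \<le> eps) = (\<bar>line u x - line v x\<bar> \<le> eps)"
    if "\<bar>line u x - line v x\<bar> \<noteq> eps" for u v X
    using eventually_abs_le_stable[OF tendsto_diff[OF tendsto_line tendsto_line] that] .
  show ?thesis
  proof (cases "\<exists>u\<in>E. \<exists>v\<in>E. line u x - line v x = eps")
    case False
    then have "\<bar>line u x - line v x\<bar> \<noteq> eps" if "u \<in> E" "v \<in> E" for u v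
      using that by (auto simp: abs_if)
    then show ?thesis using that[of "at_right x"] stable unfolding eventually_links_eq_iff by blast
  next
    case True
    then obtain u0 v0 where uv0: "u0 \<in> E" "v0 \<in> E" "line u0 x - line v0 x = eps" by blast
    define F where "F = (if k u0 \<le> k v0 then at_right x else at_left x)"
    have "\<forall>\<^sub>F y in F. (\<bar>line u y - line v y\<bar> \<le> eps) = (\<bar>line u x - line v x\<bar> \<le> eps)"
      if "u \<in> E" "v \<in> E" for u v
    proof (cases "{u, v} = {u0, v0}")
      case True
      then have same: "\<bar>line u y - line v y\<bar> = \<bar>line u0 y - line v0 y\<bar>" for y
        by (auto simp: doubleton_eq_iff abs_minus_commute)
      have at_x: "\<bar>line u0 x - line v0 x\<bar> \<le> eps" using uv0(3) eps_pos by simp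
      show ?thesis unfolding F_def
        by (rule eventually_mono[OF eventually_eps_pair_within[OF uv0(3)]]) (simp add: same at_x)
    next
      case False
      have "u0 \<noteq> v0" using uv0(3) eps_pos by auto
      then have "\<bar>line u x - line v x\<bar> \<noteq> eps"
        using eps_pair_unique[OF x that uv0(1,2) _ \<open>u0 \<noteq> v0\<close>] False uv0(3) eps_pos by force
      then show ?thesis using stable unfolding F_def by simp
    qed
    then show ?thesis using that[of F] unfolding F_def eventually_links_eq_iff by auto
  qed
qed

definition breaks :: "(real \<times> nat \<times> nat) set" where
  "breaks = snd ` segment_break_points n traj tv tau eps i"

lemma card_segment_break_points_eq_card_breaks:
  "card (segment_break_points n traj tv tau eps i) = card breaks"
  unfolding breaks_def using card_image[OF inj_on_snd_segment_break_points] by simp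

lemma lower_env_eq_Min_mid_dist:
  assumes "A \<in> conn_classes n traj eps x" "x \<in> {a..b}"
  shows "lower_env n traj A x = Min ((\<lambda>q. mid_dist q x) ` A)"
proof -
  have "(\<lambda>q. fdist n traj q x) ` A = (\<lambda>q. mid_dist q x) ` A"
    using conn_class_subset[OF assms(1)] fdist_eq_mid_dist[OF _ assms(2)] by (intro image_cong) auto
  then show ?thesis unfolding lower_env_def by simp
qed

lemma breaksE:
  assumes "(x, s, p) \<in> breaks"
  obtains A J where "component_pair n traj tv tau eps A J" "x \<in> J" "A \<subseteq> E" "s \<in> A" "p \<in> A" "s \<noteq> p"
    "x \<in> {a..b}" "mid_dist s x = mid_dist p x" "\<forall>q\<in>A. mid_dist s x \<le> mid_dist q x"
proof -
  obtain A J where AJ: "component_pair n traj tv tau eps A J" "x \<in> J" "s \<in> A" "p \<in> A" "s \<noteq> p"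
    "lower_env n traj A x = fdist n traj s x" "fdist n traj s x = fdist n traj p x" "x \<in> {a..b}"
    using assms unfolding breaks_def segment_break_points_def break_points_def by force
  have A: "A \<in> conn_classes n traj eps x" using component_pair_class[OF AJ(1,2)] .
  have AE: "A \<subseteq> E" using conn_class_subset[OF A] .
  have eq: "fdist n traj s x = mid_dist s x" "fdist n traj p x = mid_dist p x"
    using AE AJ(3,4,8) fdist_eq_mid_dist by auto
  have "\<forall>q\<in>A. mid_dist s x \<le> mid_dist q x"
    using AJ(6) eq(1) finite_subset[OF AE finite_E]
    unfolding lower_env_eq_Min_mid_dist[OF A AJ(8)] by (metis Min_le finite_imageI image_eqI)
  then show ?thesis using that AJ AE eq by simp
qed

lemma breaksI:
  assumes "component_pair n traj tv tau eps A J" "x \<in> J" "s \<in> A" "p \<in> A" "s \<noteq> p"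
    "x \<in> {a..b}" "mid_dist s x = mid_dist p x" "\<forall>q\<in>A. mid_dist s x \<le> mid_dist q x"
  shows "(x, s, p) \<in> breaks"
proof -
  have A: "A \<in> conn_classes n traj eps x" using component_pair_class[OF assms(1,2)] .
  have AE: "A \<subseteq> E" using conn_class_subset[OF A] .
  have "Min ((\<lambda>q. mid_dist q x) ` A) = mid_dist s x"
    using finite_subset[OF AE finite_E] assms(3,8) by (intro Min_eqI) auto
  moreover have "fdist n traj s x = mid_dist s x" "fdist n traj p x = mid_dist p x"
    using fdist_eq_mid_dist[OF _ assms(6)] AE assms(3,4) by auto
  ultimately have "lower_env n traj A x = fdist n traj s x" "fdist n traj s x = fdist n traj p x"
    using lower_env_eq_Min_mid_dist[OF A assms(6)] assms(7) by simp_all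
  then have "((A, J), (x, s, p)) \<in> segment_break_points n traj tv tau eps i"
    using assms unfolding segment_break_points_def break_points_def by auto
  then show ?thesis unfolding breaks_def by force
qed

lemma breaksD: "(x, s, p) \<in> breaks \<Longrightarrow> s \<in> E \<and> p \<in> E \<and> s \<noteq> p \<and> x \<in> {a..b} \<and> mid_dist s x = mid_dist p x"
  by (erule breaksE) auto

lemma breaks_swap: "(x, s, p) \<in> breaks \<Longrightarrow> (x, p, s) \<in> breaks"
  by (erule breaksE) (rule breaksI; auto)

lemma breaks_propagate:
  assumes C: "component_pair n traj tv tau eps A J" "x \<in> J" "s \<in> A" "p \<in> A" "s \<noteq> p"
    and "x \<in> {a..b}" "y \<in> {a..b}" and same_links: "\<forall>z\<in>{min x y..max x y}. links z = links x"
    and "mid_dist s y = mid_dist p y" "\<forall>q\<in>A. mid_dist s y \<le> mid_dist q y"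
  shows "(y, s, p) \<in> breaks"
proof -
  have "{min x y..max x y} \<subseteq> {a..b}" using assms(6,7) by auto
  then have "\<forall>z\<in>{min x y..max x y}. A \<in> conn_classes n traj eps z"
    using same_links conn_classes_eq_if_links_eq[OF assms(6)] component_pair_class[OF C(1,2)]
    by (metis subsetD)
  moreover have "is_real_interval {min x y..max x y}" unfolding is_real_interval_def by auto
  moreover have "x \<in> {min x y..max x y}" by simp
  ultimately have "{min x y..max x y} \<subseteq> J"
    using component_pair_absorbs[OF C(1,2)] segment_in_domain \<open>{min x y..max x y} \<subseteq> {a..b}\<close>
    by (meson order_trans)
  then have "y \<in> J" by auto
  then show ?thesis using breaksI[OF C(1) _ C(3-5) assms(7,9,10)] by simp
qed

definition gap_at :: "nat \<Rightarrow> nat \<Rightarrow> real \<Rightarrow> bool" where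
  "gap_at s p x \<longleftrightarrow> line s x < line p x \<and> line s x + line p x = 2 * mid x \<and>
     (\<forall>q\<in>E. line q x \<le> line s x \<or> line p x \<le> line q x)"

lemma gap_at_if_breaks:
  assumes "(x, s, p) \<in> breaks" "line s x < line p x"
  shows "gap_at s p x"
proof -
  obtain A J where AJ: "component_pair n traj tv tau eps A J" "x \<in> J" "A \<subseteq> E" "s \<in> A" "p \<in> A"
    "x \<in> {a..b}" "mid_dist s x = mid_dist p x" "\<forall>q\<in>A. mid_dist s x \<le> mid_dist q x"
    using assms(1) by (rule breaksE)
  have sum: "line s x + line p x = 2 * mid x"
    using AJ(7) assms(2) unfolding mid_dist_def by (auto simp: abs_if split: if_splits)
  have split: "\<forall>c\<in>A. traj c x \<le> line s x \<or> line p x \<le> traj c x"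
    using AJ(3,6,8) sum traj_eq_line
    unfolding mid_dist_def by (fastforce simp: abs_if split: if_splits)
  have "line q x \<le> line s x \<or> line p x \<le> line q x" if "q \<in> E" for q
    using conn_class_no_gap[OF component_pair_class[OF AJ(1,2)] AJ(4,5) split, of q] AJ(3-6) that
      traj_eq_line[OF _ AJ(6)] by force
  then show ?thesis using assms(2) sum unfolding gap_at_def by blast
qed

lemma gap_at_mid_dist:
  assumes "gap_at s p y"
  shows "mid_dist s y = mid_dist p y" "\<forall>q\<in>E. mid_dist s y \<le> mid_dist q y"
  using assms unfolding gap_at_def mid_dist_def by (auto simp: abs_if)

lemma gap_at_unique:
  assumes "gap_at s p x" "gap_at s' p' x" "s \<in> E" "p \<in> E" "s' \<in> E" "p' \<in> E"
  shows "line s' x = line s x" "line p' x = line p x"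
  using assms unfolding gap_at_def by (smt (verit))+

lemma gap_breaks_same_width:
  assumes sp: "(x, s, p) \<in> breaks" "line s x < line p x"
    and qr: "(x, q, r) \<in> breaks" "line q x \<noteq> line r x"
  shows "mid_dist q x = mid_dist s x"
proof -
  have g: "gap_at s p x" using gap_at_if_breaks[OF sp] .
  have E: "s \<in> E" "p \<in> E" "q \<in> E" "r \<in> E" using breaksD sp(1) qr(1) by auto
  have "gap_at q r x \<or> gap_at r q x"
    using qr breaks_swap gap_at_if_breaks by (cases "line q x < line r x") auto
  then show ?thesis
  proof
    assume "gap_at q r x"
    then show ?thesis using gap_at_unique[OF g _ E] unfolding mid_dist_def by simp
  next
    assume "gap_at r q x"
    then have "line q x = line p x" using gap_at_unique[OF g _ E(1,2,4,3)] by simp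
    then show ?thesis using gap_at_mid_dist(1)[OF g] unfolding mid_dist_def by simp
  qed
qed

lemma gap_side_between:
  assumes gx: "gap_at s p x" and gx': "gap_at s p x'" and y: "y \<in> {x..x'}"
    and no_cross: "level_times 0 \<inter> {x..x'} = {}" and "q \<in> E" "s \<in> E" "p \<in> E"
  shows "line q y \<le> line s y \<or> line p y \<le> line q y"
proof -
  have xx': "x \<le> x'" using y by simp
  have at_x: "line q x \<le> line s x \<or> line p x \<le> line q x"
    and at_x': "line q x' \<le> line s x' \<or> line p x' \<le> line q x'"
    using gx gx' \<open>q \<in> E\<close> unfolding gap_at_def by auto
  have order': "line s x' < line p x'" using gx' unfolding gap_at_def by simp
  have "\<not> (line q x \<le> line s x \<and> line p x' \<le> line q x')"
  proof
    assume "line q x \<le> line s x \<and> line p x' \<le> line q x'"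
    moreover from this have "line q = line s"
      using same_line_if_order_swaps[OF xx' no_cross \<open>q \<in> E\<close> \<open>s \<in> E\<close>] order' by simp
    ultimately show False using order' by simp
  qed
  moreover have "\<not> (line p x \<le> line q x \<and> line q x' \<le> line s x')"
  proof
    assume "line p x \<le> line q x \<and> line q x' \<le> line s x'"
    moreover from this have "line p = line q"
      using same_line_if_order_swaps[OF xx' no_cross \<open>p \<in> E\<close> \<open>q \<in> E\<close>] order' by simp
    ultimately show False using order' by simp
  qed
  ultimately have "line q x \<le> line s x \<and> line q x' \<le> line s x'
    \<or> line p x \<le> line q x \<and> line p x' \<le> line q x'"
    using at_x at_x' by blast
  then show ?thesis
    using affine_nonpos_between[of x y x' "k q - k s" "m q - m s"]
      affine_nonpos_between[of x y x' "k p - k q" "m p - m q"] y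
    unfolding line_diff[symmetric] by auto
qed

lemma gap_at_between:
  assumes gx: "gap_at s p x" and gx': "gap_at s p x'" and y: "y \<in> {x..x'}"
    and no_cross: "level_times 0 \<inter> {x..x'} = {}" and no_kink: "kink_times \<inter> {x<..<x'} = {}"
    and "s \<in> E" "p \<in> E"
  shows "gap_at s p y"
proof -
  have xx': "x \<le> x'" using y by simp
  obtain K M where mid: "\<forall>z\<in>{x..x'}. mid z = K * z + M" using mid_affine[OF xx' no_kink] by blast
  define G where "G z = (k s + k p - 2 * K) * z + (m s + m p - 2 * M)" for z
  have G_eq: "G z = line s z + line p z - 2 * mid z" if "z \<in> {x..x'}" for z
    using mid that unfolding G_def line_def by (simp add: algebra_simps)
  then have "G x = 0" "G x' = 0" using gx gx' xx' unfolding gap_at_def by auto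
  then have "G y = 0" using affine_zero_on_segment[of x y x'] y unfolding G_def by simp
  then have "line s y + line p y = 2 * mid y" using G_eq[OF y] by simp
  moreover have "line s y < line p y"
    using affine_neg_between[of x y x' "k s - k p" "m s - m p"] y gx gx'
    unfolding gap_at_def line_diff[symmetric] by simp
  ultimately show ?thesis
    using gap_side_between[OF gx gx' y no_cross] \<open>s \<in> E\<close> \<open>p \<in> E\<close> unfolding gap_at_def by blast
qed

lemma gap_lines_coincide:
  assumes g: "gap_at s p x" and g': "gap_at s' p' x'" and "x \<le> x'"
    and no_cross: "level_times 0 \<inter> {x..x'} = {}" and E: "s \<in> E" "p \<in> E" "s' \<in> E" "p' \<in> E"
    and sign: "\<forall>q\<in>E. (line q x - mid x) * (line q x' - mid x') > 0"
  shows "line s' = line s" "line p' = line p"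
proof -
  have sides: "line s x < mid x" "mid x < line p x" "line s' x' < mid x'" "mid x' < line p' x'"
    using g g' unfolding gap_at_def by auto
  have "line s' x < mid x" "line s x' < mid x'" "mid x < line p' x" "mid x' < line p x'"
    using sign E sides by (auto simp: zero_less_mult_iff)
  moreover have "line q x \<le> line s x \<or> line p x \<le> line q x"
    "line q x' \<le> line s' x' \<or> line p' x' \<le> line q x'"
    if "q \<in> E" for q
    using g g' that unfolding gap_at_def by auto
  ultimately have "line s' x \<le> line s x" "line s x' \<le> line s' x'"
    "line p x \<le> line p' x" "line p' x' \<le> line p x'"
    using E sides by (meson less_le_not_le order_less_trans)+
  then show "line s' = line s" "line p' = line p"
    using same_line_if_order_swaps[OF \<open>x \<le> x'\<close> no_cross] E by metis+
qed

lemma twin_break_propagate: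
  assumes C: "component_pair n traj tv tau eps A J" "x \<in> J" "s \<in> A" "p \<in> A" "s \<noteq> p"
    and twin: "line s = line p" and "x \<in> {a..b}" "y \<in> {a..b}"
    and "\<forall>z\<in>{min x y..max x y}. links z = links x" "\<forall>q\<in>A - {s, p}. mid_dist s y < mid_dist q y"
  shows "(y, s, p) \<in> breaks"
proof (rule breaks_propagate[OF C assms(7-9)])
  show eq: "mid_dist s y = mid_dist p y" unfolding mid_dist_def twin ..
  show "\<forall>q\<in>A. mid_dist s y \<le> mid_dist q y"
  proof
    fix q assume "q \<in> A"
    then show "mid_dist s y \<le> mid_dist q y"
      using assms(10) eq by (cases "q \<in> {s, p}") (auto intro: less_imp_le)
  qed
qed

lemma twin_break_persists:
  assumes x: "x \<in> {a<..<b}" and F: "F = at_left x \<or> F = at_right x" "\<forall>\<^sub>F y in F. links y = links x"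
    and C: "component_pair n traj tv tau eps A J" "x \<in> J" "A \<subseteq> E" "s \<in> A" "p \<in> A" "s \<noteq> p"
    and twin: "line s = line p" and strict: "\<forall>q\<in>A - {s, p}. mid_dist s x < mid_dist q x"
  obtains c where "c \<noteq> x" "\<And>y. min x c < y \<Longrightarrow> y < max x c \<Longrightarrow> (y, s, p) \<in> breaks"
proof -
  have "\<forall>\<^sub>F y in F. \<forall>q\<in>A - {s, p}. mid_dist s y < mid_dist q y"
    using eventually_mid_dist_less[of "A - {s, p}"] finite_subset[OF C(3) finite_E] strict F(1)
    by auto
  moreover have "\<forall>\<^sub>F y in F. y \<in> {a<..<b}" using eventually_one_sided_in[OF x F(1)] .
  ultimately have "\<forall>\<^sub>F y in F. links y = links x \<and> y \<in> {a<..<b} \<and>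
      (\<forall>q\<in>A - {s, p}. mid_dist s y < mid_dist q y)"
    using F(2) by (simp add: eventually_conj_iff)
  then obtain c where "c \<noteq> x" and near: "\<And>y. min x c < y \<Longrightarrow> y < max x c \<Longrightarrow>
      links y = links x \<and> y \<in> {a<..<b} \<and> (\<forall>q\<in>A - {s, p}. mid_dist s y < mid_dist q y)"
    using eventually_one_sided[OF F(1)] by blast
  have "(y, s, p) \<in> breaks" if y: "min x c < y" "y < max x c" for y
  proof (rule twin_break_propagate[OF C(1,2,4-6) twin])
    show "x \<in> {a..b}" "y \<in> {a..b}" using x near[OF y] by auto
    show "\<forall>z\<in>{min x y..max x y}. links z = links x"
    proof
      fix z assume z: "z \<in> {min x y..max x y}"
      show "links z = links x"
      proof (cases "z = x")
        case False
        then have "min x c < z" "z < max x c" using z y by (auto simp: min_def max_def split: if_splits)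
        then show ?thesis using near by blast
      qed simp
    qed
    show "\<forall>q\<in>A - {s, p}. mid_dist s y < mid_dist q y" using near[OF y] by blast
  qed
  with \<open>c \<noteq> x\<close> show thesis by (rule that)
qed

end

section \<open>Counting break points\<close>

locale finite_segment = linear_segment +
  assumes finite_tagged_breaks: "finite (segment_break_points n traj tv tau eps i)"
begin

lemma finite_breaks: "finite breaks"
  unfolding breaks_def using finite_tagged_breaks by simp

lemma no_interval_of_breaks:
  assumes "c < d" "\<And>y. y \<in> {c<..<d} \<Longrightarrow> (y, s, p) \<in> breaks"
  shows False
proof -
  have "(\<lambda>y. (y, s, p)) ` {c<..<d} \<subseteq> breaks" using assms(2) by auto
  moreover have "infinite ((\<lambda>y. (y, s, p)) ` {c<..<d})"
    using assms(1) by (simp add: finite_image_iff inj_on_def)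
  ultimately show False using finite_breaks finite_subset by blast
qed

definition gap_times :: "real set" where
  "gap_times = {x\<in>{a<..<b}. \<exists>s p. (x, s, p) \<in> breaks \<and> line s x < line p x}"

lemma finite_gap_times: "finite gap_times"
proof -
  have "gap_times \<subseteq> fst ` breaks" unfolding gap_times_def by force
  then show ?thesis using finite_breaks finite_subset by blast
qed

lemma gap_times_off_mid:
  assumes "x \<in> gap_times" "q \<in> E"
  shows "line q x \<noteq> mid x"
proof -
  obtain s p where "gap_at s p x" using assms(1) gap_at_if_breaks unfolding gap_times_def by blast
  then show ?thesis using assms(2) unfolding gap_at_def by force
qed

text \<open>Without an event the pair at x' is the pair at x, and it stays a gap break point in between.\<close>
lemma gap_times_need_event:
  assumes x: "x \<in> gap_times" and x': "x' \<in> gap_times" and "x < x'"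
    and no_event: "event_times \<inter> {x..x'} = {}"
    and sign: "\<forall>q\<in>E. (line q x - mid x) * (line q x' - mid x') > 0"
  shows False
proof -
  have no_cross: "level_times 0 \<inter> {x..x'} = {}" and no_eps: "level_times eps \<inter> {x..x'} = {}"
    and no_kink: "kink_times \<inter> {x<..<x'} = {}"
    using no_event unfolding event_times_def by auto
  obtain s p where sp: "(x, s, p) \<in> breaks" "line s x < line p x" "x \<in> {a<..<b}"
    using x unfolding gap_times_def by blast
  obtain s' p' where sp': "(x', s', p') \<in> breaks" "line s' x' < line p' x'" "x' \<in> {a<..<b}"
    using x' unfolding gap_times_def by blast
  have E: "s \<in> E" "p \<in> E" "s' \<in> E" "p' \<in> E" using breaksD sp(1) sp'(1) by auto
  have "line s' = line s" "line p' = line p"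
    using gap_lines_coincide[OF gap_at_if_breaks[OF sp(1,2)] gap_at_if_breaks[OF sp'(1,2)]
      _ no_cross E sign] \<open>x < x'\<close>
    by simp_all
  then have gap_x': "gap_at s p x'" using gap_at_if_breaks[OF sp'(1,2)] unfolding gap_at_def by simp
  obtain A J where AJ: "component_pair n traj tv tau eps A J" "x \<in> J" "A \<subseteq> E" "s \<in> A" "p \<in> A" "s \<noteq> p"
    using sp(1) by (rule breaksE)
  have "(y, s, p) \<in> breaks" if y: "y \<in> {x<..<x'}" for y
  proof -
    have g: "gap_at s p y"
      using gap_at_between[OF gap_at_if_breaks[OF sp(1,2)] gap_x' _ no_cross no_kink E(1,2)] y
      by simp
    have links: "\<forall>z\<in>{min x y..max x y}. links z = links x"
    proof
      fix z assume "z \<in> {min x y..max x y}"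
      then have "x \<le> z" "level_times eps \<inter> {x..z} = {}" using y no_eps by auto
      then show "links z = links x" using links_const by simp
    qed
    have "x \<in> {a..b}" "y \<in> {a..b}" using sp(3) sp'(3) y by auto
    moreover have "\<forall>q\<in>A. mid_dist s y \<le> mid_dist q y" using gap_at_mid_dist(2)[OF g] AJ(3) by blast
    ultimately show ?thesis
      using breaks_propagate[OF AJ(1,2,4-6) _ _ links gap_at_mid_dist(1)[OF g]] by blast
  qed
  then show False using no_interval_of_breaks[OF \<open>x < x'\<close>] by blast
qed

lemma gap_times_cover:
  "gap_times \<subseteq> insert (Max gap_times) (gaps_meeting gap_times event_times \<union>
     (\<Union>q\<in>E. sign_change_gaps gap_times kink_times (\<lambda>y. line q y - mid y)))"
proof
  fix x assume x: "x \<in> gap_times"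
  let ?x' = "succ_in gap_times x"
  show "x \<in> insert (Max gap_times) (gaps_meeting gap_times event_times \<union>
     (\<Union>q\<in>E. sign_change_gaps gap_times kink_times (\<lambda>y. line q y - mid y)))"
  proof (cases "x < Max gap_times \<and> event_times \<inter> {x..?x'} = {}")
    case True
    then have x': "?x' \<in> gap_times" "x < ?x'" using succ_in[OF finite_gap_times x] by auto
    then have "\<not> (\<forall>q\<in>E. (line q x - mid x) * (line q ?x' - mid ?x') > 0)"
      using gap_times_need_event[OF x] True by blast
    then obtain q where "q \<in> E" "(line q x - mid x) * (line q ?x' - mid ?x') \<le> 0" by auto
    moreover have "line q x - mid x \<noteq> 0" "line q ?x' - mid ?x' \<noteq> 0"
      using gap_times_off_mid x x'(1) \<open>q \<in> E\<close> by auto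
    ultimately have "(line q x - mid x) * (line q ?x' - mid ?x') < 0" by (simp add: order_le_less)
    moreover have "kink_times \<inter> {x<..<?x'} = {}" using True unfolding event_times_def by auto
    ultimately show ?thesis using True x \<open>q \<in> E\<close> unfolding sign_change_gaps_def by auto
  next
    case False
    then show ?thesis using x Max_ge[OF finite_gap_times x] unfolding gaps_meeting_def by auto
  qed
qed

lemma card_side_changes_le:
  "card (sign_change_gaps gap_times kink_times (\<lambda>y. line q y - mid y)) \<le> 2 * n + 1"
proof -
  have "\<exists>K M. \<forall>y\<in>{c..d}. line q y - mid y = K * y + M"
    if cd: "c \<le> d" "kink_times \<inter> {c<..<d} = {}" for c d
  proof -
    obtain K M where "\<forall>y\<in>{c..d}. mid y = K * y + M" using mid_affine[OF cd] by blast
    then have "\<forall>y\<in>{c..d}. line q y - mid y = (k q - K) * y + (m q - M)"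
      unfolding line_def by (simp add: algebra_simps)
    then show ?thesis by blast
  qed
  from card_sign_changes_le[OF finite_gap_times conjunct1[OF kink_times_finite_card] this]
  show ?thesis using kink_times_finite_card by linarith
qed

lemma card_gap_times_le: "card gap_times \<le> 11 * n\<^sup>2 + 1"
proof -
  let ?M = "gaps_meeting gap_times event_times"
  let ?S = "\<lambda>q. sign_change_gaps gap_times kink_times (\<lambda>y. line q y - mid y)"
  have meeting: "card ?M \<le> 4 * n\<^sup>2 + 4 * n"
    using card_gaps_meeting_le[OF finite_gap_times conjunct1[OF event_times_finite_card]]
      event_times_finite_card by linarith
  have "card (\<Union>q\<in>E. ?S q) \<le> (\<Sum>q\<in>E. card (?S q))" by (rule card_UN_le[OF finite_E])
  also have "\<dots> \<le> n * (2 * n + 1)"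
    using sum_mono[of E "\<lambda>q. card (?S q)" "\<lambda>_. 2 * n + 1"] card_side_changes_le by simp
  finally have changes: "card (\<Union>q\<in>E. ?S q) \<le> 2 * n\<^sup>2 + n"
    by (simp add: power2_eq_square algebra_simps)
  have "card gap_times \<le> card (insert (Max gap_times) (?M \<union> (\<Union>q\<in>E. ?S q)))"
    using gap_times_cover finite_gap_times unfolding gaps_meeting_def sign_change_gaps_def
    by (intro card_mono) (auto intro: finite_subset)
  also have "\<dots> \<le> card (?M \<union> (\<Union>q\<in>E. ?S q)) + 1"
    by (cases "finite (?M \<union> (\<Union>q\<in>E. ?S q))") (auto simp: card_insert_if)
  also have "\<dots> \<le> card ?M + card (\<Union>q\<in>E. ?S q) + 1"
    using card_Un_le by simp
  also have "\<dots> \<le> 11 * n\<^sup>2 + 1"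
    using meeting changes le_square[of n] unfolding power2_eq_square by linarith
  finally show ?thesis .
qed

lemma twin_break_has_partner:
  assumes "(x, s, p) \<in> breaks" "x \<in> {a<..<b}" "line s = line p"
  shows "\<exists>q. (x, s, q) \<in> breaks \<and> line q \<noteq> line s"
proof (rule ccontr)
  assume no_partner: "\<not> ?thesis"
  obtain A J where C: "component_pair n traj tv tau eps A J" "x \<in> J" "A \<subseteq> E" "s \<in> A" "p \<in> A" "s \<noteq> p"
    "x \<in> {a..b}" "mid_dist s x = mid_dist p x" "\<forall>q\<in>A. mid_dist s x \<le> mid_dist q x"
    using assms(1) by (rule breaksE)
  have "mid_dist s x < mid_dist q x" if q: "q \<in> A - {s, p}" for q
  proof (rule ccontr)
    assume "\<not> ?thesis"
    then have "mid_dist s x = mid_dist q x" using C(9) q by force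
    then have "(x, s, q) \<in> breaks" using breaksI[OF C(1,2,4) _ _ C(7) _ C(9)] q by blast
    then have "line q x = line s x" using no_partner by metis
    moreover have "line s x = line p x" using assms(3) by simp
    moreover have "q \<in> E" "s \<in> E" "p \<in> E" "q \<noteq> s" "q \<noteq> p" using C(3-5) q by auto
    ultimately show False using no_three_lines_meet[OF C(7)] C(6) by blast
  qed
  moreover obtain F where "F = at_left x \<or> F = at_right x" "\<forall>\<^sub>F y in F. links y = links x"
    using eventually_links_stable[OF C(7)] .
  ultimately obtain c where "c \<noteq> x" "\<And>y. min x c < y \<Longrightarrow> y < max x c \<Longrightarrow> (y, s, p) \<in> breaks"
    using twin_break_persists[OF assms(2) _ _ C(1-6) assms(3)] by blast
  moreover have "min x c < max x c" using \<open>c \<noteq> x\<close> by (simp add: min_def max_def)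
  ultimately show False using no_interval_of_breaks[of "min x c" "max x c" s p] by simp
qed

definition end_breaks :: "(real \<times> nat \<times> nat) set" where
  "end_breaks = {(x, s, p). (x, s, p) \<in> breaks \<and> (x = a \<or> x = b)}"

definition crossing_breaks :: "(real \<times> nat \<times> nat) set" where
  "crossing_breaks = {(x, s, p). (x, s, p) \<in> breaks \<and> line s \<noteq> line p \<and> line s x = line p x}"

definition gap_breaks :: "(real \<times> nat \<times> nat) set" where
  "gap_breaks = {(x, s, p). (x, s, p) \<in> breaks \<and> x \<in> {a<..<b} \<and> line s x \<noteq> line p x}"

definition twin_breaks :: "(real \<times> nat \<times> nat) set" where
  "twin_breaks = {(x, s, p). (x, s, p) \<in> breaks \<and> x \<in> {a<..<b} \<and> line s = line p}"

lemma breaks_cover: "breaks \<subseteq> end_breaks \<union> crossing_breaks \<union> gap_breaks \<union> twin_breaks"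
proof
  fix t assume t: "t \<in> breaks"
  obtain x s p where t_eq: "t = (x, s, p)" by (cases t) auto
  have "x \<in> {a..b}" using breaksD t unfolding t_eq by blast
  then show "t \<in> end_breaks \<union> crossing_breaks \<union> gap_breaks \<union> twin_breaks"
    using t unfolding t_eq end_breaks_def crossing_breaks_def gap_breaks_def twin_breaks_def by auto
qed

lemma card_end_breaks_le: "card end_breaks \<le> 8 * n"
proof -
  let ?partners = "\<lambda>x s. {q\<in>E. mid_dist q x = mid_dist s x}"
  have "end_breaks \<subseteq> (SIGMA x:{a, b}. SIGMA s:E. ?partners x s)"
    unfolding end_breaks_def using breaksD by auto
  then have "card end_breaks \<le> card (SIGMA x:{a, b}. SIGMA s:E. ?partners x s)"
    by (intro card_mono) auto
  also have "\<dots> = (\<Sum>x\<in>{a, b}. \<Sum>s\<in>E. card (?partners x s))" by simp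
  also have "\<dots> \<le> (\<Sum>x\<in>{a, b}. \<Sum>s\<in>E. 4)"
    using card_equidistant_le_4 a_less_b by (intro sum_mono) auto
  also have "\<dots> \<le> 8 * n" by (simp add: card_insert_if)
  finally show ?thesis .
qed

lemma card_crossing_breaks_le: "card crossing_breaks \<le> n\<^sup>2"
proof -
  have "inj_on snd crossing_breaks"
    unfolding crossing_breaks_def using lines_meet_once by (intro inj_onI) auto
  moreover have "snd ` crossing_breaks \<subseteq> E \<times> E" unfolding crossing_breaks_def using breaksD by auto
  ultimately have "card crossing_breaks \<le> card (E \<times> E)"
    using card_inj_on_le[of snd crossing_breaks "E \<times> E"] by (simp add: image_subset_iff)
  then show ?thesis by (simp add: card_cartesian_product power2_eq_square)
qed

lemma card_gap_breaks_le: "card gap_breaks \<le> 16 * card gap_times"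
proof -
  define W where "W x = {q\<in>E. \<exists>p. (x, q, p) \<in> breaks \<and> line q x \<noteq> line p x}" for x
  have "gap_breaks \<subseteq> (SIGMA x:gap_times. W x \<times> W x)"
  proof
    fix t assume "t \<in> gap_breaks"
    then obtain x s p where t: "t = (x, s, p)" "(x, s, p) \<in> breaks" "x \<in> {a<..<b}"
      "line s x \<noteq> line p x"
      unfolding gap_breaks_def by auto
    then have "x \<in> gap_times"
      using breaks_swap unfolding gap_times_def by (cases "line s x < line p x") force+
    moreover have "s \<in> W x" "p \<in> W x" using t breaks_swap breaksD unfolding W_def by force+
    ultimately show "t \<in> (SIGMA x:gap_times. W x \<times> W x)" using t(1) by simp
  qed
  moreover have "card (W x) \<le> 4" if x: "x \<in> gap_times" for x
  proof -
    obtain s0 p0 where sp0: "(x, s0, p0) \<in> breaks" "line s0 x < line p0 x" "x \<in> {a<..<b}"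
      using x unfolding gap_times_def by blast
    have "W x \<subseteq> {q\<in>E. mid_dist q x = mid_dist s0 x}"
      using gap_breaks_same_width[OF sp0(1,2)] unfolding W_def by blast
    then have "card (W x) \<le> card {q\<in>E. mid_dist q x = mid_dist s0 x}" by (intro card_mono) auto
    then show ?thesis using card_equidistant_le_4[of x "mid_dist s0 x"] sp0(3) by simp
  qed
  ultimately have "card gap_breaks \<le> (\<Sum>x\<in>gap_times. card (W x) * card (W x))"
    using card_mono[of "SIGMA x:gap_times. W x \<times> W x" gap_breaks] finite_gap_times
    unfolding W_def by (simp add: card_cartesian_product)
  also have "\<dots> \<le> (\<Sum>x\<in>gap_times. 16)"
    using \<open>\<And>x. x \<in> gap_times \<Longrightarrow> card (W x) \<le> 4\<close> mult_le_mono[of _ 4 _ 4]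
    by (intro sum_mono) fastforce
  finally show ?thesis by simp
qed

lemma card_twin_breaks_le: "card twin_breaks \<le> card (crossing_breaks \<union> gap_breaks)"
proof -
  define partner where "partner x s = (SOME q. (x, s, q) \<in> breaks \<and> line q \<noteq> line s)" for x s
  define f :: "real \<times> nat \<times> nat \<Rightarrow> real \<times> nat \<times> nat"
    where "f t = (case t of (x, s, _) \<Rightarrow> (x, s, partner x s))" for t
  have partner: "(x, s, partner x s) \<in> breaks \<and> line (partner x s) \<noteq> line s"
    if "(x, s, p) \<in> twin_breaks" for x s p
  proof -
    have "\<exists>q. (x, s, q) \<in> breaks \<and> line q \<noteq> line s"
      using twin_break_has_partner that unfolding twin_breaks_def by blast
    then show ?thesis unfolding partner_def by (rule someI_ex)
  qed
  have image: "f ` twin_breaks \<subseteq> crossing_breaks \<union> gap_breaks"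
  proof
    fix u assume "u \<in> f ` twin_breaks"
    then obtain x s p where t: "(x, s, p) \<in> twin_breaks" and u: "u = (x, s, partner x s)"
      unfolding f_def by auto
    then show "u \<in> crossing_breaks \<union> gap_breaks"
      using partner[OF t] unfolding twin_breaks_def crossing_breaks_def gap_breaks_def by auto
  qed
  have "inj_on f twin_breaks"
  proof (rule inj_onI)
    fix t t' assume t: "t \<in> twin_breaks" and t': "t' \<in> twin_breaks" and eq: "f t = f t'"
    obtain x s p x' s' p' where tt: "t = (x, s, p)" "t' = (x', s', p')" by (cases t, cases t') auto
    then have same: "x' = x" "s' = s" using eq unfolding f_def by auto
    have h: "(x, s, p) \<in> breaks" "line s = line p" and h': "(x, s, p') \<in> breaks" "line s = line p'"
      using t t' unfolding tt same twin_breaks_def by auto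
    have "p = p'"
    proof (rule ccontr)
      assume "p \<noteq> p'"
      moreover have "s \<in> E" "p \<in> E" "p' \<in> E" "s \<noteq> p" "s \<noteq> p'" "x \<in> {a..b}"
        using breaksD h(1) h'(1) by auto
      moreover have "line s x = line p x" "line p x = line p' x" using h(2) h'(2) by (metis)+
      ultimately show False using no_three_lines_meet by blast
    qed
    then show "t = t'" using tt same by simp
  qed
  moreover have "finite (crossing_breaks \<union> gap_breaks)"
    using finite_breaks unfolding crossing_breaks_def gap_breaks_def by (auto intro: finite_subset)
  ultimately show ?thesis using card_inj_on_le image by blast
qed

lemma card_breaks_le: "card breaks \<le> 400 * n\<^sup>2"
proof (cases "n = 0")
  case True
  then have "breaks = {}" using breaksD unfolding entities_def by fastforce
  then show ?thesis by simp
next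
  case False
  have "card breaks \<le> card (end_breaks \<union> crossing_breaks \<union> gap_breaks \<union> twin_breaks)"
    using finite_breaks breaks_cover
    unfolding end_breaks_def crossing_breaks_def gap_breaks_def twin_breaks_def
    by (intro card_mono) (auto intro: finite_subset)
  also have "\<dots> \<le> card end_breaks + card crossing_breaks + card gap_breaks + card twin_breaks"
    using card_Un_le[of "end_breaks \<union> crossing_breaks \<union> gap_breaks" twin_breaks]
      card_Un_le[of "end_breaks \<union> crossing_breaks" gap_breaks]
        card_Un_le[of end_breaks crossing_breaks] by linarith
  also have "\<dots> \<le> 8 * n + 354 * n\<^sup>2 + 32"
  proof -
    have "card gap_breaks \<le> 176 * n\<^sup>2 + 16" using card_gap_breaks_le card_gap_times_le by linarith
    then show ?thesis
      using card_end_breaks_le card_crossing_breaks_le card_twin_breaks_le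
        card_Un_le[of crossing_breaks gap_breaks] by linarith
  qed
  also have "\<dots> \<le> 400 * n\<^sup>2"
  proof -
    have "n \<le> n\<^sup>2" "1 \<le> n\<^sup>2" using False by (simp_all add: power2_eq_square)
    then show ?thesis by linarith
  qed
  finally show ?thesis .
qed

end

theorem mainTheorem6:
  shows "\<exists>C::real. \<forall>(n::nat) (traj::nat \<Rightarrow> real \<Rightarrow> real) (tv::nat \<Rightarrow> real) (tau::nat) (eps::real) (i::nat).
     eps > 0 \<and> time_vertices_ok tv tau \<and> piecewise_linear_traj n traj tv tau \<and>
     general_position n traj tv tau eps \<and> i < tau \<and>
     finite (segment_break_points n traj tv tau eps i) \<longrightarrow>
     real (card (segment_break_points n traj tv tau eps i)) \<le> C * (real n)\<^sup>2"
proof (intro exI[of _ 400] allI impI)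
  fix n traj tv tau eps i
  assume H: "eps > 0 \<and> time_vertices_ok tv tau \<and> piecewise_linear_traj n traj tv tau \<and>
     general_position n traj tv tau eps \<and> i < tau \<and> finite (segment_break_points n traj tv tau eps i)"
  then have "\<forall>s\<in>entities n. \<exists>c. \<forall>x\<in>{tv i..tv (Suc i)}. traj s x = fst c * x + snd c"
    unfolding piecewise_linear_traj_def by auto
  from bchoice[OF this] obtain c
    where "\<forall>s\<in>entities n. \<forall>x\<in>{tv i..tv (Suc i)}. traj s x = fst (c s) * x + snd (c s)" ..
  then interpret finite_segment n traj tv tau eps i "\<lambda>s. fst (c s)" "\<lambda>s. snd (c s)"
    using H by unfold_locales auto
  have "card (segment_break_points n traj tv tau eps i) \<le> 400 * n\<^sup>2"
    using card_segment_break_points_eq_card_breaks card_breaks_le by simp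
  then show "real (card (segment_break_points n traj tv tau eps i)) \<le> 400 * (real n)\<^sup>2"
    using of_nat_mono by fastforce
qed

end
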